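(* Let $\delta\ge 0$ be a real number and let $g,u,c:\mathbb{R}\to[0,\infty)$ be continuous functions. Consider the model $$R_t=\sigma_t\varepsilon_t,\qquad \sigma_t^{\delta}=g(\varepsilon_{t-1})+u(x_{t-1})+c(\varepsilon_{t-1})\sigma_{t-1}^{\delta},$$ where $\{\varepsilon_t\}_t$ is an i.i.d. sequence with mean $0$ and variance $1$, $\{x_t\}_t$ is a strictly stationary ergodic process independent of $\{\varepsilon_t\}_t$, and the joint process $\{(\varepsilon_t,x_t)\}_t$ is adapted to a filtration $\{\mathcal{F}_t\}_t$. Suppose that for some $\alpha\in(0,1]$, $$E|\varepsilon_t|^{\delta\alpha}<\infty,\quad E\big(u(x_t)\big)^{\alpha}<\infty,\quad E\big(c(\varepsilon_t)\big)^{\alpha}<1,\quad E\big(g(\varepsilon_t)\big)^{\alpha}<\infty .$$ Then the model admits a unique stationary solution of order $\alpha\delta$. Furthermore this solution is strictly stationary and ergodic and admits the causal representation $$R_t=\sigma_t\varepsilon_t,\qquad \sigma_t^{\delta}=g(\varepsilon_{t-1})+u(x_{t-1})+\sum_{k=1}^{\infty}\Big(\prod_{j=0}^{k-1}c(\varepsilon_{t-1-j})\Big)\big[g(\varepsilon_{t-1-k})+u(x_{t-1-k})\big].$$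
   Context: A stationary solution of order $\alpha\delta$ means a stationary solution $\{R_t\}_t$ of the model with $E|R_t|^{\alpha\delta}<\infty$. The process $\{x_t\}_t$ is an exogenous process; the functions $g,u,c$ are assumed chosen so that $P(\sigma_t>0)=1$ for every $t$. *)

theory Defs
  imports "HOL-Probability.Probability"
begin

definition path :: "(int \<Rightarrow> 'a \<Rightarrow> 'b) \<Rightarrow> 'a \<Rightarrow> (int \<Rightarrow> 'b)" where
  "path X = (\<lambda>\<omega> t. X t \<omega>)"

definition strictly_stationary ::
  "'a measure \<Rightarrow> 'b measure \<Rightarrow> (int \<Rightarrow> 'a \<Rightarrow> 'b) \<Rightarrow> bool" where
  "strictly_stationary M N X \<longleftrightarrow>
     (\<forall>t. X t \<in> measurable M N) \<and>
     (\<forall>h::int. distr M (PiM UNIV (\<lambda>_. N)) (path (\<lambda>t. X (t + h)))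
             = distr M (PiM UNIV (\<lambda>_. N)) (path X))"

definition ergodic_process ::
  "'a measure \<Rightarrow> 'b measure \<Rightarrow> (int \<Rightarrow> 'a \<Rightarrow> 'b) \<Rightarrow> bool" where
  "ergodic_process M N X \<longleftrightarrow>
     strictly_stationary M N X \<and>
     (\<forall>A \<in> sets (PiM UNIV (\<lambda>_. N)).
        (\<lambda>f t. f (t + 1)) -` A \<inter> space (PiM UNIV (\<lambda>_. N)) = A \<longrightarrow>
        measure M (path X -` A \<inter> space M) \<in> {0, 1})"

definition model_solution ::
  "'a measure \<Rightarrow> real \<Rightarrow> (real \<Rightarrow> real) \<Rightarrow> (real \<Rightarrow> real) \<Rightarrow> (real \<Rightarrow> real)
   \<Rightarrow> (int \<Rightarrow> 'a \<Rightarrow> real) \<Rightarrow> (int \<Rightarrow> 'a \<Rightarrow> real)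
   \<Rightarrow> (int \<Rightarrow> 'a \<Rightarrow> real) \<Rightarrow> (int \<Rightarrow> 'a \<Rightarrow> real) \<Rightarrow> bool" where
  "model_solution M \<delta> g u c eps x R \<sigma> \<longleftrightarrow>
     (\<forall>t. R t \<in> borel_measurable M \<and> \<sigma> t \<in> borel_measurable M) \<and>
     (\<forall>t. AE \<omega> in M.
        \<sigma> t \<omega> \<ge> 0 \<and>
        R t \<omega> = \<sigma> t \<omega> * eps t \<omega> \<and>
        \<sigma> t \<omega> powr \<delta> = g (eps (t - 1) \<omega>) + u (x (t - 1) \<omega>)
                           + c (eps (t - 1) \<omega>) * \<sigma> (t - 1) \<omega> powr \<delta>)"

definition stationary_solution_of_order ::
  "'a measure \<Rightarrow> real \<Rightarrow> real \<Rightarrow> (real \<Rightarrow> real) \<Rightarrow> (real \<Rightarrow> real) \<Rightarrow> (real \<Rightarrow> real)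
   \<Rightarrow> (int \<Rightarrow> 'a \<Rightarrow> real) \<Rightarrow> (int \<Rightarrow> 'a \<Rightarrow> real)
   \<Rightarrow> (int \<Rightarrow> 'a \<Rightarrow> real) \<Rightarrow> (int \<Rightarrow> 'a \<Rightarrow> real) \<Rightarrow> bool" where
  "stationary_solution_of_order M p \<delta> g u c eps x R \<sigma> \<longleftrightarrow>
     model_solution M \<delta> g u c eps x R \<sigma> \<and>
     strictly_stationary M borel (\<lambda>t \<omega>. (R t \<omega>, \<sigma> t \<omega>)) \<and>
     (\<forall>t. integrable M (\<lambda>\<omega>. \<bar>R t \<omega>\<bar> powr p))"

definition causal_term ::
  "(real \<Rightarrow> real) \<Rightarrow> (real \<Rightarrow> real) \<Rightarrow> (real \<Rightarrow> real)
   \<Rightarrow> (int \<Rightarrow> 'a \<Rightarrow> real) \<Rightarrow> (int \<Rightarrow> 'a \<Rightarrow> real) \<Rightarrow> int \<Rightarrow> nat \<Rightarrow> 'a \<Rightarrow> real" where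
  "causal_term g u c eps x t k \<omega> =
     (\<Prod>j<k. c (eps (t - 1 - int j) \<omega>)) *
     (g (eps (t - 1 - int k) \<omega>) + u (x (t - 1 - int k) \<omega>))"

end

theory Submission
  imports Defs
begin

text \<open>Iterating the recursion n times writes sigma_t^delta as the sum of the first n causal terms plus
  the remainder (prod_{j<n} c(eps_{t-1-j})) sigma_{t-n}^delta. Since z |-> z^alpha is subadditive for
  alpha <= 1 and the innovations are independent of each other and of x, the alpha-th moment of the
  k-th causal term is at most (E c(eps)^alpha)^k (E g(eps)^alpha + E u(x)^alpha). This geometric bound
  makes the causal series converge almost surely with |R_t|^(alpha delta) integrable; the series
  solves the recursion and, as a fixed measurable function of the shifted input paths, is strictly
  stationary. For any other stationary solution the remainder is a product tending to 0 almost
  surely times a stationary factor, hence tends to 0 in probability, so the two solutions agree.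

  The law of the input (x, eps) is the product of an ergodic law and an i.i.d., hence mixing, law.
  For a shift-invariant input event A let psi(y) be the probability of its section at the path y
  of x. Approximating A by an event depending on finitely many coordinates and comparing it with a
  far translate gives E psi = E psi^2, so psi is the indicator of a shift-invariant event of x,
  whose probability is 0 or 1.\<close>

lemma powr_add_le_add_powr:
  fixes a b p :: real
  assumes a: "0 \<le> a" and b: "0 \<le> b" and p: "0 < p" "p \<le> 1"
  shows "(a + b) powr p \<le> a powr p + b powr p"
proof (cases "a + b = 0")
  case True
  then show ?thesis using a b by simp
next
  case False
  then have s: "a + b > 0" using a b by auto
  have r1: "a / (a + b) \<le> (a / (a + b)) powr p"
    using powr_mono'[of p 1 "a / (a + b)"] a b s p by (simp add: divide_le_eq_1)
  have r2: "b / (a + b) \<le> (b / (a + b)) powr p"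
    using powr_mono'[of p 1 "b / (a + b)"] a b s p by (simp add: divide_le_eq_1)
  have "1 = a / (a + b) + b / (a + b)" using s by (simp add: add_divide_distrib[symmetric])
  also have "\<dots> \<le> (a / (a + b)) powr p + (b / (a + b)) powr p" using r1 r2 by simp
  also have "\<dots> = (a powr p + b powr p) / (a + b) powr p"
    using a b s by (simp add: powr_divide add_divide_distrib)
  finally show ?thesis using s by (simp add: le_divide_eq)
qed

lemma powr_sum_le_sum_powr:
  fixes a :: "nat \<Rightarrow> real" and p :: real
  assumes a: "\<And>k. 0 \<le> a k" and p: "0 < p" "p \<le> 1"
  shows "(\<Sum>k<n. a k) powr p \<le> (\<Sum>k<n. a k powr p)"
proof (induction n)
  case 0
  then show ?case by simp
next
  case (Suc n)
  have "(\<Sum>k<Suc n. a k) powr p \<le> (\<Sum>k<n. a k) powr p + a n powr p"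
    using powr_add_le_add_powr[OF sum_nonneg[of "{..<n}" a] a[of n] p] a by simp
  then show ?case using Suc by simp
qed

lemma powr_suminf_le_suminf_powr:
  fixes a :: "nat \<Rightarrow> real" and p :: real
  assumes a: "\<And>k. 0 \<le> a k" and p: "0 < p" "p \<le> 1" and s: "summable a"
  shows "ennreal ((\<Sum>k. a k) powr p) \<le> (\<Sum>k. ennreal (a k powr p))"
proof (cases "(\<Sum>k. ennreal (a k powr p)) = top")
  case True
  then show ?thesis by simp
next
  case False
  have sp: "summable (\<lambda>k. a k powr p)"
    by (rule summable_suminf_not_top[OF _ False]) (rule powr_ge_zero)
  have lim: "(\<lambda>n. (\<Sum>k<n. a k) powr p) \<longlonglongrightarrow> (\<Sum>k. a k) powr p"
    using p by (intro tendsto_powr' summable_LIMSEQ[OF s] tendsto_const) (simp add: sum_nonneg a)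
  have "(\<Sum>k<n. a k) powr p \<le> (\<Sum>k. a k powr p)" for n
  proof -
    have "(\<Sum>k<n. a k powr p) \<le> (\<Sum>k. a k powr p)"
      by (rule sum_le_suminf[OF sp]) auto
    then show ?thesis using powr_sum_le_sum_powr[of a p n, OF a p] by linarith
  qed
  then have "(\<Sum>k. a k) powr p \<le> (\<Sum>k. a k powr p)"
    by (intro LIMSEQ_le_const2[OF lim]) auto
  moreover have "(\<Sum>k. ennreal (a k powr p)) = ennreal (\<Sum>k. a k powr p)"
    by (rule suminf_ennreal[OF _ False]) (rule powr_ge_zero)
  ultimately show ?thesis by (simp only: ennreal_leI)
qed

lemma summable_of_summable_powr:
  fixes a :: "nat \<Rightarrow> real" and p :: real
  assumes a: "\<And>k. 0 \<le> a k" and p: "0 < p" "p \<le> 1" and s: "summable (\<lambda>k. a k powr p)"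
  shows "summable a"
proof (rule summable_comparison_test_ev[OF _ s])
  have "eventually (\<lambda>k. a k powr p < 1) sequentially"
    using summable_LIMSEQ_zero[OF s] by (rule order_tendstoD) simp
  then show "eventually (\<lambda>k. norm (a k) \<le> a k powr p) sequentially"
  proof (rule eventually_mono)
    fix k
    assume "a k powr p < 1"
    then have "a k \<le> 1" using a p by (metis ge_one_powr_ge_zero less_eq_real_def not_le)
    then show "norm (a k) \<le> a k powr p" using powr_mono'[of p 1 "a k"] a p by simp
  qed
qed

lemma summable_of_suminf_ennreal_powr_finite:
  fixes a :: "nat \<Rightarrow> real" and p :: real
  assumes "\<And>k. 0 \<le> a k" "0 < p" "p \<le> 1" "(\<Sum>k. ennreal (a k powr p)) \<noteq> \<infinity>"
  shows "summable a"
  using assms by (intro summable_of_summable_powr[of a p] summable_suminf_not_top) auto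

abbreviation path_space :: "(int \<Rightarrow> real) measure" where
  "path_space \<equiv> PiM UNIV (\<lambda>_. borel)"

definition shift_path :: "int \<Rightarrow> (int \<Rightarrow> 'b) \<Rightarrow> int \<Rightarrow> 'b" where
  "shift_path h f = (\<lambda>t. f (t + h))"

lemma space_path_space[simp]: "space path_space = UNIV"
  by (simp add: space_PiM PiE_def extensional_def)

lemma measurable_shift_path[measurable]:
  "shift_path h \<in> measurable (PiM UNIV (\<lambda>_. N)) (PiM UNIV (\<lambda>_. N))"
  unfolding shift_path_def by (rule measurable_PiM_single') (auto simp: space_PiM)

lemma measurable_fst_apply[measurable]: "(\<lambda>p. fst p s) \<in> borel_measurable (path_space \<Otimes>\<^sub>M N)"
  by (rule measurable_compose[OF measurable_fst]) simp

lemma measurable_snd_apply[measurable]: "(\<lambda>p. snd p s) \<in> borel_measurable (N \<Otimes>\<^sub>M path_space)"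
  by (rule measurable_compose[OF measurable_snd]) simp

lemma measurable_path:
  assumes "\<And>t. X t \<in> measurable M N"
  shows "path X \<in> measurable M (PiM UNIV (\<lambda>_. N))"
  unfolding path_def using assms measurable_space[OF assms]
  by (intro measurable_PiM_single') (auto simp: space_PiM)

lemma path_shift: "path (\<lambda>s. X (s + h)) = (\<lambda>\<omega>. shift_path h (path X \<omega>))"
  by (simp add: path_def shift_path_def fun_eq_iff)

lemma measurable_summable[measurable (raw)]:
  fixes f :: "nat \<Rightarrow> 'a \<Rightarrow> real"
  assumes [measurable]: "\<And>i. f i \<in> borel_measurable M"
  shows "Measurable.pred M (\<lambda>x. summable (\<lambda>i. f i x))"
proof -
  have "{x\<in>space M. Cauchy (\<lambda>n. \<Sum>i<n. f i x)} \<in> sets M" by measurable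
  then show ?thesis by (simp add: pred_def summable_iff_convergent Cauchy_convergent_iff)
qed

lemma strictly_stationary_distr_eq:
  assumes "strictly_stationary M N Z"
  shows "distr M N (Z s) = distr M N (Z 0)"
proof -
  have m: "\<And>t. Z t \<in> measurable M N" using assms by (simp add: strictly_stationary_def)
  have pm: "path (\<lambda>r. Z (r + s)) \<in> measurable M (PiM UNIV (\<lambda>_. N))" by (rule measurable_path) (simp add: m)
  have pm0: "path Z \<in> measurable M (PiM UNIV (\<lambda>_. N))" by (rule measurable_path) (simp add: m)
  have "distr M N (Z s) = distr M N ((\<lambda>f. f 0) \<circ> path (\<lambda>r. Z (r + s)))"
    by (simp add: o_def path_def)
  also have "\<dots> = distr (distr M (PiM UNIV (\<lambda>_. N)) (path (\<lambda>r. Z (r + s)))) N (\<lambda>f. f 0)"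
    by (rule distr_distr[symmetric]) (auto intro!: pm)
  also have "\<dots> = distr (distr M (PiM UNIV (\<lambda>_. N)) (path Z)) N (\<lambda>f. f 0)"
    using assms by (simp add: strictly_stationary_def)
  also have "\<dots> = distr M N ((\<lambda>f. f 0) \<circ> path Z)"
    by (rule distr_distr) (auto intro!: pm0)
  finally show ?thesis by (simp add: o_def path_def)
qed

lemma (in prob_space) iid_path_emeasure_cylinder:
  assumes ind: "indep_vars (\<lambda>_. borel) X UNIV" and rv: "\<And>t. X t \<in> borel_measurable M"
    and ident: "\<And>t. distr M borel (X t) = distr M borel (X 0)"
    and J: "finite J" and A: "\<And>j. j \<in> J \<Longrightarrow> A j \<in> sets borel"
  shows "emeasure (distr M path_space (path (\<lambda>t. X (t + h)))) (prod_emb UNIV (\<lambda>_. borel) J (Pi\<^sub>E J A))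
       = ennreal (\<Prod>j\<in>J. measure (distr M borel (X 0)) (A j))"
proof -
  have pm: "path (\<lambda>t. X (t + h)) \<in> measurable M path_space"
    by (rule measurable_path) (simp add: rv)
  have S: "prod_emb UNIV (\<lambda>_. borel) J (Pi\<^sub>E J A) \<in> sets path_space"
    using J A by (intro sets_PiM_I) auto
  have pre: "path (\<lambda>t. X (t + h)) -` prod_emb UNIV (\<lambda>_. borel) J (Pi\<^sub>E J A) \<inter> space M
      = {\<omega>\<in>space M. \<forall>j\<in>J. X (j + h) \<omega> \<in> A j}"
    by (auto simp: prod_emb_iff path_def PiE_iff extensional_def)
  have mX: "\<And>t B. B \<in> sets borel \<Longrightarrow> prob (X t -` B \<inter> space M) = measure (distr M borel (X 0)) B"
    using ident rv by (metis measure_distr sets_borel)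
  show ?thesis
  proof (cases "J = {}")
    case True
    then have "{\<omega>\<in>space M. \<forall>j\<in>J. X (j + h) \<omega> \<in> A j} = space M" by auto
    then show ?thesis using emeasure_distr[OF pm S] pre True by (simp add: emeasure_space_1)
  next
    case False
    have eqs: "{\<omega>\<in>space M. \<forall>j\<in>J. X (j + h) \<omega> \<in> A j}
        = (\<Inter>i\<in>(\<lambda>j. j + h) ` J. X i -` A (i - h) \<inter> space M)"
      using False by auto
    have inj: "inj_on (\<lambda>j. j + h) J" by (auto simp: inj_on_def)
    have "prob (\<Inter>i\<in>(\<lambda>j. j + h) ` J. X i -` A (i - h) \<inter> space M)
        = (\<Prod>i\<in>(\<lambda>j. j + h) ` J. prob (X i -` A (i - h) \<inter> space M))"
      using False J A by (intro indep_varsD[OF ind]) auto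
    also have "\<dots> = (\<Prod>j\<in>J. prob (X (j + h) -` A j \<inter> space M))"
      by (subst prod.reindex[OF inj]) simp
    also have "\<dots> = (\<Prod>j\<in>J. measure (distr M borel (X 0)) (A j))"
      using A mX by (intro prod.cong) auto
    finally have "prob {\<omega>\<in>space M. \<forall>j\<in>J. X (j + h) \<omega> \<in> A j} = (\<Prod>j\<in>J. measure (distr M borel (X 0)) (A j))"
      using eqs by simp
    then show ?thesis
      using emeasure_distr[OF pm S] pre by (simp add: emeasure_eq_measure)
  qed
qed

lemma (in prob_space) iid_path_shift_invariant:
  assumes ind: "indep_vars (\<lambda>_. borel) X UNIV" and rv: "\<And>t. X t \<in> borel_measurable M"
    and ident: "\<And>t. distr M borel (X t) = distr M borel (X 0)"
  shows "distr M path_space (path (\<lambda>t. X (t + h))) = distr M path_space (path X)"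
proof (rule measure_eqI_PiM_infinite)
  show "sets (distr M path_space (path (\<lambda>t. X (t + h)))) = sets path_space" by simp
  show "sets (distr M path_space (path X)) = sets path_space" by simp
  have "prob_space (distr M path_space (path (\<lambda>t. X (t + h))))"
    by (intro prob_space_distr measurable_path) (simp add: rv)
  then show "finite_measure (distr M path_space (path (\<lambda>t. X (t + h))))"
    by (simp add: prob_space_def)
  fix A :: "int \<Rightarrow> real set" and J :: "int set"
  assume "finite J" "J \<subseteq> UNIV" "\<And>i. i \<in> J \<Longrightarrow> A i \<in> sets borel"
  then show "emeasure (distr M path_space (path (\<lambda>t. X (t + h)))) (prod_emb UNIV (\<lambda>_. borel) J (Pi\<^sub>E J A))
      = emeasure (distr M path_space (path X)) (prod_emb UNIV (\<lambda>_. borel) J (Pi\<^sub>E J A))"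
    using iid_path_emeasure_cylinder[OF ind rv ident, of J A h]
      iid_path_emeasure_cylinder[OF ind rv ident, of J A 0]
    by simp
qed

section \<open>Convergence to zero in probability\<close>

definition tendsto_zero_in_prob :: "'a measure \<Rightarrow> (nat \<Rightarrow> 'a \<Rightarrow> real) \<Rightarrow> bool" where
  "tendsto_zero_in_prob M f \<longleftrightarrow> (\<forall>\<eta>>0. (\<lambda>n. measure M {\<omega>\<in>space M. \<eta> < \<bar>f n \<omega>\<bar>}) \<longlonglongrightarrow> 0)"

context prob_space
begin

lemma tendsto_zero_in_prob_if_AE_tendsto:
  fixes f :: "nat \<Rightarrow> 'a \<Rightarrow> real"
  assumes [measurable]: "\<And>n. f n \<in> borel_measurable M"
    and lim: "AE \<omega> in M. (\<lambda>n. f n \<omega>) \<longlonglongrightarrow> 0"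
  shows "tendsto_zero_in_prob M f"
  unfolding tendsto_zero_in_prob_def
proof safe
  fix \<eta> :: real
  assume eta: "0 < \<eta>"
  define s :: "nat \<Rightarrow> 'a \<Rightarrow> real" where "s n = indicator {\<omega>\<in>space M. \<eta> < \<bar>f n \<omega>\<bar>}" for n
  have [measurable]: "s n \<in> borel_measurable M" for n unfolding s_def by measurable
  have "(\<lambda>n. integral\<^sup>L M (s n)) \<longlonglongrightarrow> integral\<^sup>L M (\<lambda>_. 0::real)"
  proof (rule integral_dominated_convergence[where w="\<lambda>_. 1"])
    show "AE \<omega> in M. (\<lambda>n. s n \<omega>) \<longlonglongrightarrow> 0"
      using lim
    proof (rule eventually_mono)
      fix \<omega>
      assume "(\<lambda>n. f n \<omega>) \<longlonglongrightarrow> 0"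
      then have "eventually (\<lambda>n. \<bar>f n \<omega>\<bar> < \<eta>) sequentially"
        using eta by (metis (no_types) order_tendstoD(2) tendsto_rabs_zero)
      then have "eventually (\<lambda>n. s n \<omega> = 0) sequentially"
        by (rule eventually_mono) (auto simp: s_def)
      then show "(\<lambda>n. s n \<omega>) \<longlonglongrightarrow> 0" by (rule tendsto_eventually)
    qed
    show "AE \<omega> in M. norm (s n \<omega>) \<le> 1" for n by (auto simp: s_def indicator_def)
  qed auto
  then show "(\<lambda>n. prob {\<omega>\<in>space M. \<eta> < \<bar>f n \<omega>\<bar>}) \<longlonglongrightarrow> 0" by (simp add: s_def)
qed

lemma tendsto_zero_in_prob_add:
  fixes f g :: "nat \<Rightarrow> 'a \<Rightarrow> real"
  assumes [measurable]: "\<And>n. f n \<in> borel_measurable M" "\<And>n. g n \<in> borel_measurable M"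
    and f: "tendsto_zero_in_prob M f" and g: "tendsto_zero_in_prob M g"
  shows "tendsto_zero_in_prob M (\<lambda>n \<omega>. f n \<omega> + g n \<omega>)"
  unfolding tendsto_zero_in_prob_def
proof safe
  fix \<eta> :: real
  assume eta: "0 < \<eta>"
  let ?F = "\<lambda>n. prob {\<omega>\<in>space M. \<eta> / 2 < \<bar>f n \<omega>\<bar>}" and ?G = "\<lambda>n. prob {\<omega>\<in>space M. \<eta> / 2 < \<bar>g n \<omega>\<bar>}"
  have le: "prob {\<omega>\<in>space M. \<eta> < \<bar>f n \<omega> + g n \<omega>\<bar>} \<le> ?F n + ?G n" for n
  proof -
    have "prob {\<omega>\<in>space M. \<eta> < \<bar>f n \<omega> + g n \<omega>\<bar>}
        \<le> prob ({\<omega>\<in>space M. \<eta> / 2 < \<bar>f n \<omega>\<bar>} \<union> {\<omega>\<in>space M. \<eta> / 2 < \<bar>g n \<omega>\<bar>})"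
      by (rule finite_measure_mono) auto
    also have "\<dots> \<le> ?F n + ?G n" by (rule measure_Un_le) auto
    finally show ?thesis .
  qed
  have "?F \<longlonglongrightarrow> 0" "?G \<longlonglongrightarrow> 0"
    using f g eta half_gt_zero unfolding tendsto_zero_in_prob_def by blast+
  then have lim: "(\<lambda>n. ?F n + ?G n) \<longlonglongrightarrow> 0" using tendsto_add by fastforce
  show "(\<lambda>n. prob {\<omega>\<in>space M. \<eta> < \<bar>f n \<omega> + g n \<omega>\<bar>}) \<longlonglongrightarrow> 0"
    by (rule tendsto_sandwich[OF _ _ tendsto_const lim]) (use le in auto)
qed

lemma ex_prob_abs_gt_less:
  fixes Y :: "'a \<Rightarrow> real"
  assumes [measurable]: "Y \<in> borel_measurable M" and e: "0 < e"
  obtains K where "0 < K" "prob {\<omega>\<in>space M. K < \<bar>Y \<omega>\<bar>} < e"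
proof -
  have "tendsto_zero_in_prob M (\<lambda>m \<omega>. Y \<omega> * inverse (real (Suc m)))"
    by (rule tendsto_zero_in_prob_if_AE_tendsto)
      (auto intro!: AE_I2 tendsto_mult_right_zero LIMSEQ_inverse_real_of_nat simp del: of_nat_Suc)
  then have "(\<lambda>m. prob {\<omega>\<in>space M. 1 < \<bar>Y \<omega> * inverse (real (Suc m))\<bar>}) \<longlonglongrightarrow> 0"
    unfolding tendsto_zero_in_prob_def by simp
  then have "eventually (\<lambda>m. prob {\<omega>\<in>space M. 1 < \<bar>Y \<omega> * inverse (real (Suc m))\<bar>} < e) sequentially"
    using e by (rule order_tendstoD(2))
  then obtain m where "prob {\<omega>\<in>space M. 1 < \<bar>Y \<omega> * inverse (real (Suc m))\<bar>} < e"
    by (auto simp: eventually_sequentially)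
  moreover have "1 < \<bar>y * inverse (real (Suc m))\<bar> \<longleftrightarrow> real (Suc m) < \<bar>y\<bar>" for y
    by (simp add: abs_mult divide_inverse[symmetric] less_divide_eq_1_pos del: of_nat_Suc)
  ultimately show thesis by (intro that[of "real (Suc m)"]) simp_all
qed

lemma prob_abs_gt_eq_if_distr_eq:
  fixes X Y :: "'a \<Rightarrow> real"
  assumes [measurable]: "X \<in> borel_measurable M" "Y \<in> borel_measurable M"
    and eq: "distr M borel X = distr M borel Y"
  shows "prob {\<omega>\<in>space M. K < \<bar>X \<omega>\<bar>} = prob {\<omega>\<in>space M. K < \<bar>Y \<omega>\<bar>}"
proof -
  have S: "{v::real. K < \<bar>v\<bar>} \<in> sets borel" by measurable
  have "prob {\<omega>\<in>space M. K < \<bar>Z \<omega>\<bar>} = measure (distr M borel Z) {v. K < \<bar>v\<bar>}"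
    if [measurable]: "Z \<in> borel_measurable M" for Z :: "'a \<Rightarrow> real"
    using S by (subst measure_distr) (auto intro!: arg_cong[where f=prob])
  then show ?thesis using eq by simp
qed

text \<open>An identically distributed sequence is tight, which is all that is used of \<open>g\<close>.\<close>
lemma tendsto_zero_in_prob_mult_ident_distr:
  fixes f g :: "nat \<Rightarrow> 'a \<Rightarrow> real"
  assumes [measurable]: "\<And>n. f n \<in> borel_measurable M" "\<And>n. g n \<in> borel_measurable M"
    and f: "tendsto_zero_in_prob M f"
    and ident: "\<And>n. distr M borel (g n) = distr M borel (g 0)"
  shows "tendsto_zero_in_prob M (\<lambda>n \<omega>. f n \<omega> * g n \<omega>)"
  unfolding tendsto_zero_in_prob_def
proof safe
  fix \<eta> :: real
  assume eta: "0 < \<eta>"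
  show "(\<lambda>n. prob {\<omega>\<in>space M. \<eta> < \<bar>f n \<omega> * g n \<omega>\<bar>}) \<longlonglongrightarrow> 0"
  proof (rule order_tendstoI)
    fix e :: real
    assume e: "0 < e"
    obtain K where K: "0 < K" "prob {\<omega>\<in>space M. K < \<bar>g 0 \<omega>\<bar>} < e / 2"
      using ex_prob_abs_gt_less[of "g 0" "e / 2"] e by auto
    have "(\<lambda>n. prob {\<omega>\<in>space M. \<eta> / K < \<bar>f n \<omega>\<bar>}) \<longlonglongrightarrow> 0"
      using f eta K unfolding tendsto_zero_in_prob_def by simp
    then have "eventually (\<lambda>n. prob {\<omega>\<in>space M. \<eta> / K < \<bar>f n \<omega>\<bar>} < e / 2) sequentially"
      by (rule order_tendstoD(2)) (use e in simp)
    then show "eventually (\<lambda>n. prob {\<omega>\<in>space M. \<eta> < \<bar>f n \<omega> * g n \<omega>\<bar>} < e) sequentially"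
    proof (rule eventually_mono)
      fix n
      assume n: "prob {\<omega>\<in>space M. \<eta> / K < \<bar>f n \<omega>\<bar>} < e / 2"
      have sub: "{\<omega>\<in>space M. \<eta> < \<bar>f n \<omega> * g n \<omega>\<bar>}
          \<subseteq> {\<omega>\<in>space M. \<eta> / K < \<bar>f n \<omega>\<bar>} \<union> {\<omega>\<in>space M. K < \<bar>g n \<omega>\<bar>}"
      proof safe
        fix \<omega>
        assume "\<eta> < \<bar>f n \<omega> * g n \<omega>\<bar>" "\<not> K < \<bar>g n \<omega>\<bar>"
        then have "\<eta> < \<bar>f n \<omega>\<bar> * K"
          using mult_left_mono[of "\<bar>g n \<omega>\<bar>" K "\<bar>f n \<omega>\<bar>"] by (simp add: abs_mult)
        then show "\<eta> / K < \<bar>f n \<omega>\<bar>" using K by (simp add: divide_less_eq)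
      qed
      have "prob {\<omega>\<in>space M. \<eta> < \<bar>f n \<omega> * g n \<omega>\<bar>}
          \<le> prob {\<omega>\<in>space M. \<eta> / K < \<bar>f n \<omega>\<bar>} + prob {\<omega>\<in>space M. K < \<bar>g n \<omega>\<bar>}"
        using sub by (intro order_trans[OF finite_measure_mono measure_Un_le]) auto
      then show "prob {\<omega>\<in>space M. \<eta> < \<bar>f n \<omega> * g n \<omega>\<bar>} < e"
        using n K prob_abs_gt_eq_if_distr_eq[OF _ _ ident[of n], of K] by simp
    qed
  qed (auto intro!: always_eventually less_le_trans[OF _ measure_nonneg])
qed

lemma tendsto_zero_in_prob_suminf_tail:
  fixes f :: "nat \<Rightarrow> 'a \<Rightarrow> real"
  assumes [measurable]: "\<And>k. f k \<in> borel_measurable M"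
    and summable: "AE \<omega> in M. summable (\<lambda>k. f k \<omega>)"
  shows "tendsto_zero_in_prob M (\<lambda>n \<omega>. (\<Sum>k. f k \<omega>) - (\<Sum>k<n. f k \<omega>))"
proof (rule tendsto_zero_in_prob_if_AE_tendsto)
  have "(\<lambda>n. (\<Sum>k. f k \<omega>) - (\<Sum>k<n. f k \<omega>)) \<longlonglongrightarrow> 0" if "summable (\<lambda>k. f k \<omega>)" for \<omega>
    using tendsto_diff[OF tendsto_const summable_LIMSEQ[OF that], of "\<Sum>k. f k \<omega>"] by simp
  then show "AE \<omega> in M. (\<lambda>n. (\<Sum>k. f k \<omega>) - (\<Sum>k<n. f k \<omega>)) \<longlonglongrightarrow> 0"
    using summable by (simp add: eventually_mono)
qed measurable

lemma AE_zero_if_dominated_in_prob: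
  fixes D :: "'a \<Rightarrow> real" and Z :: "nat \<Rightarrow> 'a \<Rightarrow> real"
  assumes [measurable]: "D \<in> borel_measurable M" "\<And>n. Z n \<in> borel_measurable M"
    and dom: "\<And>n. AE \<omega> in M. \<bar>D \<omega>\<bar> \<le> Z n \<omega>"
    and Z: "tendsto_zero_in_prob M Z"
  shows "AE \<omega> in M. D \<omega> = 0"
proof -
  have small: "AE \<omega> in M. \<bar>D \<omega>\<bar> \<le> \<eta>" if eta: "0 < \<eta>" for \<eta>
  proof -
    have le: "prob {\<omega>\<in>space M. \<eta> < \<bar>D \<omega>\<bar>} \<le> prob {\<omega>\<in>space M. \<eta> < \<bar>Z n \<omega>\<bar>}" for n
      by (rule finite_measure_mono_AE) (use dom[of n] in \<open>auto elim!: eventually_mono\<close>)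
    have lim: "(\<lambda>n. prob {\<omega>\<in>space M. \<eta> < \<bar>Z n \<omega>\<bar>}) \<longlonglongrightarrow> 0"
      using Z eta unfolding tendsto_zero_in_prob_def by blast
    have "prob {\<omega>\<in>space M. \<eta> < \<bar>D \<omega>\<bar>} \<le> 0"
      by (rule LIMSEQ_le_const[OF lim]) (use le in blast)
    then have "emeasure M {\<omega>\<in>space M. \<eta> < \<bar>D \<omega>\<bar>} = 0"
      using measure_nonneg[of M "{\<omega>\<in>space M. \<eta> < \<bar>D \<omega>\<bar>}"] by (simp add: emeasure_eq_measure)
    then show ?thesis by (subst AE_iff_measurable[OF _ refl]) (auto simp: not_le)
  qed
  have "AE \<omega> in M. \<forall>m. \<bar>D \<omega>\<bar> \<le> inverse (real (Suc m))"
    unfolding AE_all_countable by (auto intro: small)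
  then show ?thesis
  proof (rule eventually_mono)
    fix \<omega>
    assume "\<forall>m. \<bar>D \<omega>\<bar> \<le> inverse (real (Suc m))"
    then have "\<bar>D \<omega>\<bar> \<le> 0" by (intro LIMSEQ_le_const[OF LIMSEQ_inverse_real_of_nat]) auto
    then show "D \<omega> = 0" by simp
  qed
qed

lemma AE_eq_indicator_if_integral_eq_integral_sq:
  fixes f :: "'a \<Rightarrow> real"
  assumes [measurable]: "f \<in> borel_measurable M" and f: "\<And>y. 0 \<le> f y" "\<And>y. f y \<le> 1"
    and eq: "(\<integral>y. f y \<partial>M) = (\<integral>y. f y * f y \<partial>M)"
  shows "AE y in M. f y = indicator {y. f y = 1} y"
proof -
  have int: "integrable M f" "integrable M (\<lambda>y. f y * f y)"
    using f by (auto intro!: integrable_const_bound[where B=1] simp: mult_le_one)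
  have "(\<integral>y. f y - f y * f y \<partial>M) = 0" using eq int by simp
  moreover have "AE y in M. 0 \<le> f y - f y * f y"
    using f by (intro AE_I2) (simp add: mult_left_le_one_le)
  ultimately have "AE y in M. f y - f y * f y = 0"
    using int by (subst integral_nonneg_eq_0_iff_AE[symmetric]) auto
  then show ?thesis by (rule eventually_mono) (auto simp: indicator_def algebra_simps)
qed

end

section \<open>Approximation by events depending on finitely many coordinates\<close>

lemma (in finite_measure) measure_diff_le_symdiff:
  assumes A: "A \<in> sets M" and B: "B \<in> sets M"
  shows "\<bar>measure M A - measure M B\<bar> \<le> measure M (sym_diff A B)"
proof -
  have "measure M A \<le> measure M (B \<union> sym_diff A B)"
    using A B by (intro finite_measure_mono) auto
  also have "\<dots> \<le> measure M B + measure M (sym_diff A B)"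
    using A B by (intro measure_Un_le) auto
  finally have 1: "measure M A \<le> measure M B + measure M (sym_diff A B)" .
  have "measure M B \<le> measure M (A \<union> sym_diff A B)"
    using A B by (intro finite_measure_mono) auto
  also have "\<dots> \<le> measure M A + measure M (sym_diff A B)"
    using A B by (intro measure_Un_le) auto
  finally have 2: "measure M B \<le> measure M A + measure M (sym_diff A B)" .
  show ?thesis using 1 2 by linarith
qed

lemma (in finite_measure) approx_Union:
  fixes a :: "nat \<Rightarrow> 'a set"
  assumes Fsub: "\<F> \<subseteq> sets M" and Fe: "{} \<in> \<F>"
    and Fu: "\<And>A B. A \<in> \<F> \<Longrightarrow> B \<in> \<F> \<Longrightarrow> A \<union> B \<in> \<F>"
    and as: "\<And>i. a i \<in> sets M"
    and approx: "\<And>i e. 0 < e \<Longrightarrow> \<exists>F\<in>\<F>. measure M (sym_diff (a i) F) < e"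
    and e: "0 < e"
  shows "\<exists>F\<in>\<F>. measure M (sym_diff (\<Union>i. a i) F) < e"
proof -
  define U where "U n = (\<Union>i<n. a i)" for n
  have Us: "U n \<in> sets M" for n unfolding U_def using as by auto
  have "(\<lambda>n. measure M (U n)) \<longlonglongrightarrow> measure M (\<Union>n. U n)"
    using Us by (intro finite_Lim_measure_incseq) (auto simp: U_def incseq_def intro: less_le_trans)
  moreover have "(\<Union>n. U n) = (\<Union>i. a i)" unfolding U_def by auto
  ultimately have "eventually (\<lambda>n. measure M (\<Union>i. a i) - e / 2 < measure M (U n)) sequentially"
    using e by (intro order_tendstoD(1)) auto
  then obtain n where n: "measure M (\<Union>i. a i) - e / 2 < measure M (U n)"
    by (auto simp: eventually_sequentially)
  have "\<forall>i. \<exists>F\<in>\<F>. measure M (sym_diff (a i) F) < e / (2 * real (Suc n))"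
    using approx e by simp
  then obtain F where F: "\<And>i. F i \<in> \<F>" "\<And>i. measure M (sym_diff (a i) (F i)) < e / (2 * real (Suc n))"
    by metis
  define FF where "FF = (\<Union>i<n. F i)"
  have FFin: "FF \<in> \<F>" unfolding FF_def
  proof (induction n)
    case 0
    then show ?case using Fe by simp
  next
    case (Suc n)
    have "(\<Union>i<Suc n. F i) = F n \<union> (\<Union>i<n. F i)" by (auto simp: lessThan_Suc)
    then show ?case using Fu[OF F(1) Suc] by simp
  qed
  have Fs: "F i \<in> sets M" for i using F(1) Fsub by auto
  have m1: "measure M ((\<Union>i. a i) - U n) < e / 2"
  proof -
    have "U n \<subseteq> (\<Union>i. a i)" unfolding U_def by auto
    then have "measure M ((\<Union>i. a i) - U n) = measure M (\<Union>i. a i) - measure M (U n)"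
      using Us as by (intro finite_measure_Diff) auto
    then show ?thesis using n by simp
  qed
  have "measure M (\<Union>i<n. sym_diff (a i) (F i)) \<le> (\<Sum>i<n. measure M (sym_diff (a i) (F i)))"
    using as Fs by (intro measure_UNION_le) auto
  also have "\<dots> \<le> (\<Sum>i<n. e / (2 * real (Suc n)))"
    using F(2) by (intro sum_mono less_imp_le) auto
  also have "\<dots> \<le> e / 2"
    using e by (simp add: field_simps)
  finally have m2: "measure M (\<Union>i<n. sym_diff (a i) (F i)) \<le> e / 2" .
  have "sym_diff (\<Union>i. a i) FF \<subseteq> ((\<Union>i. a i) - U n) \<union> (\<Union>i<n. sym_diff (a i) (F i))"
    unfolding FF_def U_def by blast
  then have "measure M (sym_diff (\<Union>i. a i) FF)
      \<le> measure M (((\<Union>i. a i) - U n) \<union> (\<Union>i<n. sym_diff (a i) (F i)))"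
    using as Fs Us by (intro finite_measure_mono) auto
  also have "\<dots> \<le> measure M ((\<Union>i. a i) - U n) + measure M (\<Union>i<n. sym_diff (a i) (F i))"
    using as Fs Us by (intro measure_Un_le) auto
  also have "\<dots> < e" using m1 m2 by linarith
  finally show ?thesis using FFin by blast
qed

lemma (in finite_measure) approx_sigma_sets:
  assumes sets_eq: "sets M = sigma_sets \<Omega> G" and G_sub: "G \<subseteq> Pow \<Omega>" and sp: "space M = \<Omega>"
    and Fsub: "\<F> \<subseteq> sets M" and Fe: "{} \<in> \<F>" and Fc: "\<And>A. A \<in> \<F> \<Longrightarrow> \<Omega> - A \<in> \<F>"
    and Fu: "\<And>A B. A \<in> \<F> \<Longrightarrow> B \<in> \<F> \<Longrightarrow> A \<union> B \<in> \<F>"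
    and gen: "\<And>A e. A \<in> G \<Longrightarrow> 0 < e \<Longrightarrow> \<exists>F\<in>\<F>. measure M (sym_diff A F) < e"
    and A: "A \<in> sigma_sets \<Omega> G" and e: "0 < e"
  shows "\<exists>F\<in>\<F>. measure M (sym_diff A F) < e"
  using A e
proof (induction arbitrary: e rule: sigma_sets.induct)
  case (Basic a)
  then show ?case using gen by blast
next
  case Empty
  then show ?case using Fe by (intro bexI[of _ "{}"]) auto
next
  case (Compl a)
  then obtain F where F: "F \<in> \<F>" "measure M (sym_diff a F) < e" by blast
  have "a \<subseteq> \<Omega>" using sigma_sets_into_sp[OF G_sub Compl.hyps] .
  moreover have "F \<subseteq> \<Omega>" using F(1) Fsub sets.sets_into_space sp by blast
  ultimately have "sym_diff (\<Omega> - a) (\<Omega> - F) = sym_diff a F" by blast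
  then show ?case using F Fc by (intro bexI[of _ "\<Omega> - F"]) auto
next
  case (Union a)
  have "a i \<in> sets M" for i using Union.hyps sets_eq by auto
  then show ?case using approx_Union[OF Fsub Fe Fu] Union.IH Union.prems by blast
qed

definition depends_on :: "int set \<Rightarrow> (int \<Rightarrow> 'b) set \<Rightarrow> bool" where
  "depends_on I S \<longleftrightarrow> (\<forall>f f'. (\<forall>t\<in>I. f t = f' t) \<longrightarrow> (f \<in> S \<longleftrightarrow> f' \<in> S))"

definition pair_depends_on :: "int set \<Rightarrow> ((int \<Rightarrow> 'b) \<times> (int \<Rightarrow> 'c)) set \<Rightarrow> bool" where
  "pair_depends_on I S \<longleftrightarrow>
     (\<forall>p q. (\<forall>t\<in>I. fst p t = fst q t \<and> snd p t = snd q t) \<longrightarrow> (p \<in> S \<longleftrightarrow> q \<in> S))"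

lemma depends_on_mono: "depends_on I S \<Longrightarrow> I \<subseteq> J \<Longrightarrow> depends_on J S"
  unfolding depends_on_def by blast

lemma pair_depends_on_mono: "pair_depends_on I S \<Longrightarrow> I \<subseteq> J \<Longrightarrow> pair_depends_on J S"
  unfolding pair_depends_on_def by blast

lemma pair_depends_on_Times:
  assumes "depends_on I A" "depends_on I B"
  shows "pair_depends_on I (A \<times> B)"
  unfolding pair_depends_on_def
proof (intro allI impI)
  fix p q :: "(int \<Rightarrow> 'a) \<times> (int \<Rightarrow> 'b)"
  assume "\<forall>t\<in>I. fst p t = fst q t \<and> snd p t = snd q t"
  then have "fst p \<in> A \<longleftrightarrow> fst q \<in> A" "snd p \<in> B \<longleftrightarrow> snd q \<in> B"
    using assms unfolding depends_on_def by auto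
  then show "p \<in> A \<times> B \<longleftrightarrow> q \<in> A \<times> B" by (cases p, cases q) auto
qed

definition window :: "nat \<Rightarrow> int set" where
  "window N = {- int N..int N}"

lemma window_mono: "N \<le> N' \<Longrightarrow> window N \<subseteq> window N'"
  by (auto simp: window_def)

lemma depends_on_Un: "depends_on I A \<Longrightarrow> depends_on I B \<Longrightarrow> depends_on I (A \<union> B)"
  unfolding depends_on_def by blast

lemma pair_depends_on_Un: "pair_depends_on I A \<Longrightarrow> pair_depends_on I B \<Longrightarrow> pair_depends_on I (A \<union> B)"
  unfolding pair_depends_on_def by blast

lemma approx_path_event_by_window:
  assumes fm: "finite_measure \<nu>" and sn: "sets \<nu> = sets path_space" and S: "S \<in> sets path_space"
    and e: "0 < e"
  shows "\<exists>F\<in>{F\<in>sets path_space. \<exists>N. depends_on (window N) F}. measure \<nu> (sym_diff S F) < e"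
proof (rule finite_measure.approx_sigma_sets[OF fm])
  let ?\<F> = "{F\<in>sets path_space. \<exists>N. depends_on (window N) F}"
  show "sets \<nu> = sigma_sets UNIV (prod_algebra UNIV (\<lambda>_::int. borel::real measure))"
    using sn by (simp add: sets_PiM PiE_UNIV_domain)
  then show "S \<in> sigma_sets UNIV (prod_algebra UNIV (\<lambda>_::int. borel::real measure))"
    using S sn by simp
  show "space \<nu> = UNIV" using sets_eq_imp_space_eq[OF sn] by simp
  show "?\<F> \<subseteq> sets \<nu>" using sn by auto
  show "{} \<in> ?\<F>" by (auto simp: depends_on_def)
  show "UNIV - A \<in> ?\<F>" if "A \<in> ?\<F>" for A
    using that sets.compl_sets[of A path_space] unfolding depends_on_def by auto
  show "A \<union> B \<in> ?\<F>" if h: "A \<in> ?\<F>" "B \<in> ?\<F>" for A B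
  proof -
    obtain N1 N2 where "depends_on (window N1) A" "depends_on (window N2) B" using h by auto
    then have "depends_on (window (max N1 N2)) A" "depends_on (window (max N1 N2)) B"
      by (auto intro: depends_on_mono[OF _ window_mono[OF max.cobounded1]] depends_on_mono[OF _ window_mono[OF max.cobounded2]])
    then have "depends_on (window (max N1 N2)) (A \<union> B)" by (rule depends_on_Un)
    then show ?thesis using h by auto
  qed
  show "\<exists>F\<in>?\<F>. measure \<nu> (sym_diff A F) < e"
    if A: "A \<in> prod_algebra UNIV (\<lambda>_::int. borel::real measure)" and e: "0 < e" for A e
  proof -
    obtain J X where AJ: "A = prod_emb UNIV (\<lambda>_::int. borel::real measure) J (Pi\<^sub>E J X)"
      and J: "finite J" and X: "\<And>i. i \<in> J \<Longrightarrow> X i \<in> sets borel"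
      using A by (elim prod_algebraE) auto
    define N where "N = nat (Max (insert 0 (abs ` J)))"
    have "\<bar>j\<bar> \<le> int N" if "j \<in> J" for j
      using J that unfolding N_def by (auto intro: Max_ge)
    then have JN: "J \<subseteq> window N" by (force simp: window_def abs_le_iff)
    have "depends_on J A"
      unfolding depends_on_def AJ by (auto simp: prod_emb_iff PiE_iff extensional_def)
    then have "depends_on (window N) A" using JN by (rule depends_on_mono)
    moreover have "A \<in> sets path_space" using A by (auto intro: sets_PiM_I_finite simp: AJ J X sets_PiM_I)
    ultimately show ?thesis using e by (intro bexI[of _ A]) auto
  qed
qed (use e in auto)

lemma (in pair_prob_space) measure_sym_diff_Times_le:
  assumes "a \<in> sets M1" "F \<in> sets M1" "b \<in> sets M2" "G \<in> sets M2"
  shows "measure (M1 \<Otimes>\<^sub>M M2) (sym_diff (a \<times> b) (F \<times> G))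
       \<le> measure M1 (sym_diff a F) + measure M2 (sym_diff b G)"
proof -
  let ?X = "sym_diff a F" and ?Y = "sym_diff b G"
  have XY: "?X \<in> sets M1" "?Y \<in> sets M2" using assms by auto
  have "sym_diff (a \<times> b) (F \<times> G) \<subseteq> ?X \<times> space M2 \<union> space M1 \<times> ?Y"
    using assms[THEN sets.sets_into_space] by blast
  then have "measure (M1 \<Otimes>\<^sub>M M2) (sym_diff (a \<times> b) (F \<times> G))
      \<le> measure (M1 \<Otimes>\<^sub>M M2) (?X \<times> space M2 \<union> space M1 \<times> ?Y)"
    using XY by (intro P.finite_measure_mono) auto
  also have "\<dots> \<le> measure (M1 \<Otimes>\<^sub>M M2) (?X \<times> space M2) + measure (M1 \<Otimes>\<^sub>M M2) (space M1 \<times> ?Y)"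
    using XY by (intro measure_Un_le) auto
  also have "\<dots> = measure M1 ?X + measure M2 ?Y"
    using XY M1.emeasure_space_1 M2.emeasure_space_1
    by (simp add: measure_def M2.emeasure_pair_measure_Times)
  finally show ?thesis .
qed

lemma approx_pair_event_by_window:
  assumes P: "prob_space P" and Q: "prob_space Q"
    and sP: "sets P = sets path_space" and sQ: "sets Q = sets path_space"
    and S: "S \<in> sets (path_space \<Otimes>\<^sub>M path_space)" and e: "0 < e"
  shows "\<exists>F\<in>{F\<in>sets (path_space \<Otimes>\<^sub>M path_space). \<exists>N. pair_depends_on (window N) F}.
           measure (P \<Otimes>\<^sub>M Q) (sym_diff S F) < e"
proof -
  interpret P: prob_space P by (rule P)
  interpret Q: prob_space Q by (rule Q)
  interpret PQ: pair_prob_space P Q ..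
  let ?\<F> = "{F\<in>sets (path_space \<Otimes>\<^sub>M path_space). \<exists>N. pair_depends_on (window N) F}"
  have sPQ: "sets (P \<Otimes>\<^sub>M Q) = sets (path_space \<Otimes>\<^sub>M path_space)"
    using sP sQ by (intro sets_pair_measure_cong)
  have spPQ: "space (P \<Otimes>\<^sub>M Q) = UNIV"
    using sets_eq_imp_space_eq[OF sPQ] by (simp add: space_pair_measure)
  show ?thesis
  proof (rule PQ.approx_sigma_sets)
    show "sets (P \<Otimes>\<^sub>M Q) = sigma_sets UNIV {a \<times> b | a b. a \<in> sets path_space \<and> b \<in> sets path_space}"
      using sPQ by (simp add: sets_pair_measure)
    then show "S \<in> sigma_sets UNIV {a \<times> b | a b. a \<in> sets path_space \<and> b \<in> sets path_space}"
      using S sPQ by simp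
    show "space (P \<Otimes>\<^sub>M Q) = UNIV" by (rule spPQ)
    show "?\<F> \<subseteq> sets (P \<Otimes>\<^sub>M Q)" using sPQ by auto
    show "{} \<in> ?\<F>" by (auto simp: pair_depends_on_def)
    show "UNIV - A \<in> ?\<F>" if "A \<in> ?\<F>" for A
      using that sets.compl_sets[of A "path_space \<Otimes>\<^sub>M path_space"]
      unfolding pair_depends_on_def by (auto simp: space_pair_measure)
    show "A \<union> B \<in> ?\<F>" if h: "A \<in> ?\<F>" "B \<in> ?\<F>" for A B
    proof -
      obtain N1 N2 where "pair_depends_on (window N1) A" "pair_depends_on (window N2) B"
        using h by auto
      then have "pair_depends_on (window (max N1 N2)) A"
          "pair_depends_on (window (max N1 N2)) B"
        by (auto intro: pair_depends_on_mono[OF _ window_mono[OF max.cobounded1]]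
            pair_depends_on_mono[OF _ window_mono[OF max.cobounded2]])
      then have "pair_depends_on (window (max N1 N2)) (A \<union> B)" by (rule pair_depends_on_Un)
      then show ?thesis using h by auto
    qed
    show "\<exists>F\<in>?\<F>. measure (P \<Otimes>\<^sub>M Q) (sym_diff A F) < e"
      if A: "A \<in> {a \<times> b | a b. a \<in> sets path_space \<and> b \<in> sets path_space}" and e: "0 < e" for A e
    proof -
      obtain a b where ab: "A = a \<times> b" "a \<in> sets path_space" "b \<in> sets path_space" using A by auto
      obtain F1 N1 where F1: "F1 \<in> sets path_space" "depends_on (window N1) F1"
          "measure P (sym_diff a F1) < e / 2"
        using approx_path_event_by_window[OF P.finite_measure_axioms sP ab(2), of "e / 2"] e by auto
      obtain F2 N2 where F2: "F2 \<in> sets path_space" "depends_on (window N2) F2"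
          "measure Q (sym_diff b F2) < e / 2"
        using approx_path_event_by_window[OF Q.finite_measure_axioms sQ ab(3), of "e / 2"] e by auto
      have dep: "pair_depends_on (window (max N1 N2)) (F1 \<times> F2)"
        using depends_on_mono[OF F1(2) window_mono[OF max.cobounded1]]
          depends_on_mono[OF F2(2) window_mono[OF max.cobounded2]]
        by (rule pair_depends_on_Times)
      have "measure (P \<Otimes>\<^sub>M Q) (sym_diff A (F1 \<times> F2)) \<le> measure P (sym_diff a F1) + measure Q (sym_diff b F2)"
        unfolding ab(1) using ab F1 F2 sP sQ by (intro PQ.measure_sym_diff_Times_le) auto
      then have "measure (P \<Otimes>\<^sub>M Q) (sym_diff A (F1 \<times> F2)) < e" using F1 F2 by simp
      moreover have "F1 \<times> F2 \<in> sets (path_space \<Otimes>\<^sub>M path_space)" using F1 F2 by auto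
      ultimately show ?thesis using dep by blast
    qed
  qed (use e in auto)
qed

lemma (in prob_space) indep_var_nn_integral:
  assumes ind: "indep_var borel X borel Y" and X: "\<And>\<omega>. 0 \<le> X \<omega>" and Y: "\<And>\<omega>. 0 \<le> Y \<omega>"
  shows "(\<integral>\<^sup>+\<omega>. ennreal (X \<omega> * Y \<omega>) \<partial>M) = (\<integral>\<^sup>+\<omega>. ennreal (X \<omega>) \<partial>M) * (\<integral>\<^sup>+\<omega>. ennreal (Y \<omega>) \<partial>M)"
proof -
  have ind2: "indep_var borel (ennreal \<circ> X) borel (ennreal \<circ> Y)"
    by (rule indep_var_compose[OF ind]) measurable
  have iv: "indep_vars (\<lambda>_. borel) (case_bool (ennreal \<circ> X) (ennreal \<circ> Y)) UNIV"
    using ind2 unfolding indep_var_def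
    by (rule indep_vars_cong[THEN iffD1, rotated 3]) (auto split: bool.split)
  have "(\<integral>\<^sup>+\<omega>. (\<Prod>i\<in>UNIV. case_bool (ennreal \<circ> X) (ennreal \<circ> Y) i \<omega>) \<partial>M)
      = (\<Prod>i\<in>UNIV. \<integral>\<^sup>+\<omega>. case_bool (ennreal \<circ> X) (ennreal \<circ> Y) i \<omega> \<partial>M)"
    by (rule indep_vars_nn_integral[OF _ iv]) (auto split: bool.split)
  then show ?thesis by (simp add: UNIV_bool mult.commute ennreal_mult X Y o_def)
qed

lemma (in prob_space) indep_path_events:
  assumes ind: "indep_vars (\<lambda>_. borel) X UNIV" and rv: "\<And>t. X t \<in> borel_measurable M"
    and S1: "S1 \<in> sets path_space" and S2: "S2 \<in> sets path_space" and I: "I1 \<inter> I2 = {}"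
    and d1: "depends_on I1 S1" and d2: "depends_on I2 S2"
  shows "measure (distr M path_space (path X)) (S1 \<inter> S2)
       = measure (distr M path_space (path X)) S1 * measure (distr M path_space (path X)) S2"
proof -
  have pm: "path X \<in> measurable M path_space" by (rule measurable_path) (rule rv)
  have law: "measure (distr M path_space (path X)) S = prob {\<omega>\<in>space M. path X \<omega> \<in> S}"
    if "S \<in> sets path_space" for S
    using that pm by (subst measure_distr) (auto intro!: arg_cong[where f=prob])
  define ext :: "int set \<Rightarrow> (int \<Rightarrow> real) \<Rightarrow> int \<Rightarrow> real" where
    "ext I h = (\<lambda>s. if s \<in> I then h s else 0)" for I h
  have ext_meas: "ext I \<in> measurable (PiM I (\<lambda>_. borel)) path_space" for I
    unfolding ext_def
  proof (rule measurable_PiM_single')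
    show "(\<lambda>\<omega>. if s \<in> I then \<omega> s else 0) \<in> borel_measurable (PiM I (\<lambda>_. borel))" for s
      by (cases "s \<in> I") auto
  qed (auto simp: space_PiM)
  define Y where "Y I \<omega> = restrict (\<lambda>i. X i \<omega>) I" for I \<omega>
  define Z where "Z I S = ext I -` S \<inter> space (PiM I (\<lambda>_. borel::real measure))" for I S
  have Zs: "Z I S \<in> sets (PiM I (\<lambda>_. borel))" if "S \<in> sets path_space" for I S
    unfolding Z_def by (rule measurable_sets[OF ext_meas that])
  have event: "path X \<omega> \<in> S \<longleftrightarrow> Y I \<omega> \<in> Z I S" if "depends_on I S" for I S \<omega>
  proof -
    have "\<forall>t\<in>I. path X \<omega> t = ext I (Y I \<omega>) t" by (simp add: ext_def Y_def path_def)
    then have "path X \<omega> \<in> S \<longleftrightarrow> ext I (Y I \<omega>) \<in> S" using that unfolding depends_on_def by blast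
    then show ?thesis by (simp add: Z_def Y_def space_PiM)
  qed
  have iv: "indep_var (PiM I1 (\<lambda>_. borel)) (Y I1) (PiM I2 (\<lambda>_. borel)) (Y I2)"
    unfolding Y_def using I by (intro indep_var_restrict[OF ind]) auto
  have "measure (distr M path_space (path X)) (S1 \<inter> S2)
      = prob ((\<lambda>\<omega>. (Y I1 \<omega>, Y I2 \<omega>)) -` (Z I1 S1 \<times> Z I2 S2) \<inter> space M)"
    using S1 S2 event[OF d1] event[OF d2] by (subst law) (auto intro!: arg_cong[where f=prob])
  also have "\<dots> = prob (Y I1 -` Z I1 S1 \<inter> space M) * prob (Y I2 -` Z I2 S2 \<inter> space M)"
    by (rule indep_varD[OF iv Zs[OF S1] Zs[OF S2]])
  also have "prob (Y I1 -` Z I1 S1 \<inter> space M) = measure (distr M path_space (path X)) S1"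
    using S1 event[OF d1] by (subst law) (auto intro!: arg_cong[where f=prob])
  also have "prob (Y I2 -` Z I2 S2 \<inter> space M) = measure (distr M path_space (path X)) S2"
    using S2 event[OF d2] by (subst law) (auto intro!: arg_cong[where f=prob])
  finally show ?thesis .
qed

definition causal_term_path ::
  "(real \<Rightarrow> real) \<Rightarrow> (real \<Rightarrow> real) \<Rightarrow> (real \<Rightarrow> real) \<Rightarrow> (int \<Rightarrow> real) \<Rightarrow> (int \<Rightarrow> real)
   \<Rightarrow> int \<Rightarrow> nat \<Rightarrow> real" where
  "causal_term_path g u c e y t k =
     (\<Prod>j<k. c (e (t - 1 - int j))) * (g (e (t - 1 - int k)) + u (y (t - 1 - int k)))"

definition causal_sum ::
  "(real \<Rightarrow> real) \<Rightarrow> (real \<Rightarrow> real) \<Rightarrow> (real \<Rightarrow> real) \<Rightarrow> (int \<Rightarrow> real) \<Rightarrow> (int \<Rightarrow> real)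
   \<Rightarrow> int \<Rightarrow> real" where
  "causal_sum g u c e y t = (\<Sum>k. causal_term_path g u c e y t k)"

text \<open>The volatility of the causal solution; the value 0 off the convergence set is arbitrary.\<close>
definition causal_sigma ::
  "real \<Rightarrow> (real \<Rightarrow> real) \<Rightarrow> (real \<Rightarrow> real) \<Rightarrow> (real \<Rightarrow> real) \<Rightarrow> (int \<Rightarrow> real) \<Rightarrow> (int \<Rightarrow> real)
   \<Rightarrow> int \<Rightarrow> real" where
  "causal_sigma \<delta> g u c e y t =
     (if summable (causal_term_path g u c e y t) then causal_sum g u c e y t powr (1 / \<delta>) else 0)"

lemma causal_term_eq_causal_term_path:
  "causal_term g u c eps x t k \<omega> = causal_term_path g u c (path eps \<omega>) (path x \<omega>) t k"
  by (simp add: causal_term_def causal_term_path_def path_def)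

lemma causal_term_path_shift:
  "causal_term_path g u c (shift_path h e) (shift_path h y) t = causal_term_path g u c e y (t + h)"
  by (simp add: causal_term_path_def shift_path_def algebra_simps fun_eq_iff)

lemma causal_sigma_shift:
  "causal_sigma \<delta> g u c (shift_path h e) (shift_path h y) t = causal_sigma \<delta> g u c e y (t + h)"
  by (simp add: causal_sigma_def causal_sum_def causal_term_path_shift)

lemma causal_term_path_nonneg:
  assumes "\<forall>v. g v \<ge> 0" "\<forall>v. u v \<ge> 0" "\<forall>v. c v \<ge> 0"
  shows "0 \<le> causal_term_path g u c e y t k"
  using assms unfolding causal_term_path_def by (intro mult_nonneg_nonneg prod_nonneg add_nonneg_nonneg) auto

lemma causal_term_path_0: "causal_term_path g u c e y t 0 = g (e (t - 1)) + u (y (t - 1))"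
  by (simp add: causal_term_path_def)

lemma causal_term_path_Suc:
  "causal_term_path g u c e y t (Suc k) = c (e (t - 1)) * causal_term_path g u c e y (t - 1) k"
  unfolding causal_term_path_def prod.lessThan_Suc_shift by (simp add: algebra_simps)

lemma causal_sum_split_head:
  "summable (causal_term_path g u c e y t) \<Longrightarrow>
   causal_sum g u c e y t = g (e (t - 1)) + u (y (t - 1)) + (\<Sum>k. causal_term_path g u c e y t (Suc k))"
  unfolding causal_sum_def by (simp add: suminf_split_head causal_term_path_0)

lemma causal_sum_recursion:
  assumes s: "summable (causal_term_path g u c e y (t - 1))"
  shows "summable (causal_term_path g u c e y t)"
    and "causal_sum g u c e y t = g (e (t - 1)) + u (y (t - 1)) + c (e (t - 1)) * causal_sum g u c e y (t - 1)"
proof -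
  have "summable (\<lambda>k. causal_term_path g u c e y t (Suc k))"
    unfolding causal_term_path_Suc by (rule summable_mult[OF s])
  then show st: "summable (causal_term_path g u c e y t)" by (simp add: summable_Suc_iff)
  have "(\<Sum>k. causal_term_path g u c e y t (Suc k)) = c (e (t - 1)) * causal_sum g u c e y (t - 1)"
    unfolding causal_term_path_Suc causal_sum_def by (rule suminf_mult[OF s])
  then show "causal_sum g u c e y t = g (e (t - 1)) + u (y (t - 1)) + c (e (t - 1)) * causal_sum g u c e y (t - 1)"
    using causal_sum_split_head[OF st] by simp
qed

context
  fixes g u c :: "real \<Rightarrow> real"
  assumes [measurable]: "g \<in> borel_measurable borel" "u \<in> borel_measurable borel" "c \<in> borel_measurable borel"
begin

lemma measurable_causal_term_path[measurable]:
  "(\<lambda>p. causal_term_path g u c (snd p) (fst p) t k) \<in> borel_measurable (path_space \<Otimes>\<^sub>M path_space)"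
  unfolding causal_term_path_def by measurable

lemma measurable_causal_sigma[measurable]:
  "(\<lambda>p. causal_sigma \<delta> g u c (snd p) (fst p) t) \<in> borel_measurable (path_space \<Otimes>\<^sub>M path_space)"
  unfolding causal_sigma_def causal_sum_def by measurable

end

definition shift_pair :: "int \<Rightarrow> (int \<Rightarrow> 'b) \<times> (int \<Rightarrow> 'c) \<Rightarrow> (int \<Rightarrow> 'b) \<times> (int \<Rightarrow> 'c)" where
  "shift_pair h p = (shift_path h (fst p), shift_path h (snd p))"

lemma measurable_shift_pair[measurable]:
  "shift_pair h \<in> measurable (path_space \<Otimes>\<^sub>M path_space) (path_space \<Otimes>\<^sub>M path_space)"
  unfolding shift_pair_def by measurable

lemma shift_pair_add: "shift_pair (a + b) p = shift_pair a (shift_pair b p)"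
  by (simp add: shift_pair_def shift_path_def fun_eq_iff algebra_simps)

lemma vimage_shift_pair_of_nat:
  assumes "shift_pair 1 -` A = A"
  shows "shift_pair (int n) -` A = A"
proof (induction n)
  case 0
  then show ?case by (simp add: shift_pair_def shift_path_def)
next
  case (Suc n)
  have e: "shift_pair (int (Suc n)) p = shift_pair (int n) (shift_pair 1 p)" for p
    using shift_pair_add[of "int n" 1 p] by (simp add: add.commute)
  have "shift_pair (int (Suc n)) -` A = shift_pair 1 -` (shift_pair (int n) -` A)"
    unfolding vimage_def by (simp only: e mem_Collect_eq)
  then show ?case using Suc assms by simp
qed

locale causal_model = prob_space M for M :: "'a measure" +
  fixes \<delta> \<alpha> :: real and g u c :: "real \<Rightarrow> real" and eps x :: "int \<Rightarrow> 'a \<Rightarrow> real"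
  assumes delta_pos: "\<delta> > 0"
    and g_meas[measurable]: "g \<in> borel_measurable borel" and g_nonneg: "\<forall>v. g v \<ge> 0"
    and u_meas[measurable]: "u \<in> borel_measurable borel" and u_nonneg: "\<forall>v. u v \<ge> 0"
    and c_meas[measurable]: "c \<in> borel_measurable borel" and c_nonneg: "\<forall>v. c v \<ge> 0"
    and eps_meas: "\<forall>t. eps t \<in> borel_measurable M"
    and eps_indep: "indep_vars (\<lambda>_. borel) eps UNIV"
    and eps_ident: "\<forall>t. distr M borel (eps t) = distr M borel (eps 0)"
    and x_erg: "ergodic_process M borel x"
    and x_eps_indep: "indep_var path_space (path x) path_space (path eps)"
    and alpha: "0 < \<alpha>" "\<alpha> \<le> 1"
    and mom_eps: "\<forall>t. integrable M (\<lambda>\<omega>. \<bar>eps t \<omega>\<bar> powr (\<delta> * \<alpha>))"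
    and mom_u: "\<forall>t. integrable M (\<lambda>\<omega>. u (x t \<omega>) powr \<alpha>)"
    and mom_c: "\<forall>t. integrable M (\<lambda>\<omega>. c (eps t \<omega>) powr \<alpha>) \<and> integral\<^sup>L M (\<lambda>\<omega>. c (eps t \<omega>) powr \<alpha>) < 1"
    and mom_g: "\<forall>t. integrable M (\<lambda>\<omega>. g (eps t \<omega>) powr \<alpha>)"
begin

lemma x_stationary: "strictly_stationary M borel x"
  using x_erg by (simp add: ergodic_process_def)

lemma measurable_eps[measurable]: "eps t \<in> borel_measurable M"
  using eps_meas by auto

lemma measurable_x[measurable]: "x t \<in> borel_measurable M"
  using x_stationary by (simp add: strictly_stationary_def)

lemma measurable_path_x[measurable]: "path x \<in> measurable M path_space"
  by (rule measurable_path) simp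

lemma measurable_path_eps[measurable]: "path eps \<in> measurable M path_space"
  by (rule measurable_path) simp

definition "law_x = distr M path_space (path x)"
definition "law_eps = distr M path_space (path eps)"
definition "joint_law = distr M (path_space \<Otimes>\<^sub>M path_space) (\<lambda>\<omega>. (path x \<omega>, path eps \<omega>))"

lemma prob_space_law_x: "prob_space law_x"
  unfolding law_x_def by (rule prob_space_distr) simp

lemma prob_space_law_eps: "prob_space law_eps"
  unfolding law_eps_def by (rule prob_space_distr) simp

lemma prob_space_joint_law: "prob_space joint_law"
  unfolding joint_law_def by (rule prob_space_distr) simp

lemma sets_law_x[simp, measurable_cong]: "sets law_x = sets path_space"
  by (simp add: law_x_def)

lemma sets_law_eps[simp, measurable_cong]: "sets law_eps = sets path_space"
  by (simp add: law_eps_def)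

lemma sets_joint_law[simp, measurable_cong]: "sets joint_law = sets (path_space \<Otimes>\<^sub>M path_space)"
  by (simp add: joint_law_def)

lemma space_law_eps[simp]: "space law_eps = UNIV"
  by (simp add: law_eps_def)

lemma space_joint_law[simp]: "space joint_law = UNIV"
  by (simp add: joint_law_def space_pair_measure)

lemma joint_law_eq_pair_measure: "joint_law = law_x \<Otimes>\<^sub>M law_eps"
  using x_eps_indep unfolding indep_var_distribution_eq joint_law_def law_x_def law_eps_def by simp

lemma law_x_shift_invariant: "distr law_x path_space (shift_path h) = law_x"
proof -
  have "distr law_x path_space (shift_path h) = distr M path_space (shift_path h \<circ> path x)"
    unfolding law_x_def by (rule distr_distr) measurable
  also have "shift_path h \<circ> path x = path (\<lambda>s. x (s + h))" by (simp add: path_shift o_def)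
  finally show ?thesis using x_stationary unfolding strictly_stationary_def law_x_def by simp
qed

lemma law_eps_shift_invariant: "distr law_eps path_space (shift_path h) = law_eps"
proof -
  have "distr law_eps path_space (shift_path h) = distr M path_space (shift_path h \<circ> path eps)"
    unfolding law_eps_def by (rule distr_distr) measurable
  also have "shift_path h \<circ> path eps = path (\<lambda>s. eps (s + h))" by (simp add: path_shift o_def)
  finally show ?thesis
    unfolding law_eps_def using eps_indep eps_ident by (simp add: iid_path_shift_invariant)
qed

lemma joint_law_shift_invariant: "distr joint_law (path_space \<Otimes>\<^sub>M path_space) (shift_pair h) = joint_law"
proof -
  interpret Pe: prob_space law_eps by (rule prob_space_law_eps)
  have T: "(\<lambda>(a, b). (shift_path h a, shift_path h b)) = shift_pair h"
    by (auto simp: shift_pair_def fun_eq_iff)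
  have "distr law_x path_space (shift_path h) \<Otimes>\<^sub>M distr law_eps path_space (shift_path h)
      = distr (law_x \<Otimes>\<^sub>M law_eps) (path_space \<Otimes>\<^sub>M path_space) (\<lambda>(a, b). (shift_path h a, shift_path h b))"
    using law_eps_shift_invariant Pe.sigma_finite_measure_axioms
    by (intro pair_measure_distr) (simp_all add: measurable_cong_sets[OF sets_law_x refl]
        measurable_cong_sets[OF sets_law_eps refl])
  then have "law_x \<Otimes>\<^sub>M law_eps = distr (law_x \<Otimes>\<^sub>M law_eps) (path_space \<Otimes>\<^sub>M path_space) (shift_pair h)"
    by (simp only: T law_x_shift_invariant law_eps_shift_invariant)
  then show ?thesis by (simp only: joint_law_eq_pair_measure)
qed

lemma distr_shift_pair_paths:
  "distr M (path_space \<Otimes>\<^sub>M path_space) (\<lambda>\<omega>. shift_pair h (path x \<omega>, path eps \<omega>)) = joint_law"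
proof -
  have "distr M (path_space \<Otimes>\<^sub>M path_space) (shift_pair h \<circ> (\<lambda>\<omega>. (path x \<omega>, path eps \<omega>)))
      = distr joint_law (path_space \<Otimes>\<^sub>M path_space) (shift_pair h)"
    unfolding joint_law_def by (rule distr_distr[symmetric]) measurable
  then show ?thesis using joint_law_shift_invariant by (simp add: o_def)
qed

lemma nn_integral_eps_eq:
  fixes f :: "real \<Rightarrow> ennreal"
  assumes [measurable]: "f \<in> borel_measurable borel"
  shows "(\<integral>\<^sup>+\<omega>. f (eps t \<omega>) \<partial>M) = (\<integral>\<^sup>+\<omega>. f (eps 0 \<omega>) \<partial>M)"
proof -
  have "(\<integral>\<^sup>+\<omega>. f (eps t \<omega>) \<partial>M) = (\<integral>\<^sup>+v. f v \<partial>distr M borel (eps t))"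
    by (rule nn_integral_distr[symmetric]) measurable
  also have "\<dots> = (\<integral>\<^sup>+v. f v \<partial>distr M borel (eps 0))" using eps_ident by metis
  also have "\<dots> = (\<integral>\<^sup>+\<omega>. f (eps 0 \<omega>) \<partial>M)" by (rule nn_integral_distr) measurable
  finally show ?thesis .
qed

lemma nn_integral_x_eq:
  fixes f :: "real \<Rightarrow> ennreal"
  assumes [measurable]: "f \<in> borel_measurable borel"
  shows "(\<integral>\<^sup>+\<omega>. f (x t \<omega>) \<partial>M) = (\<integral>\<^sup>+\<omega>. f (x 0 \<omega>) \<partial>M)"
proof -
  have "(\<integral>\<^sup>+\<omega>. f (x t \<omega>) \<partial>M) = (\<integral>\<^sup>+v. f v \<partial>distr M borel (x t))"
    by (rule nn_integral_distr[symmetric]) measurable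
  also have "\<dots> = (\<integral>\<^sup>+v. f v \<partial>distr M borel (x 0))"
    using strictly_stationary_distr_eq[OF x_stationary] by metis
  also have "\<dots> = (\<integral>\<^sup>+\<omega>. f (x 0 \<omega>) \<partial>M)" by (rule nn_integral_distr) measurable
  finally show ?thesis .
qed

lemma nn_integral_prod_eps_mult_x:
  fixes I :: "int set" and \<phi> :: "int \<Rightarrow> real \<Rightarrow> real" and \<psi> :: "real \<Rightarrow> real"
  assumes I: "finite I" and [measurable]: "\<And>s. \<phi> s \<in> borel_measurable borel" and \<phi>: "\<And>s v. 0 \<le> \<phi> s v"
    and [measurable]: "\<psi> \<in> borel_measurable borel" and \<psi>: "\<And>v. 0 \<le> \<psi> v"
  shows "(\<integral>\<^sup>+\<omega>. ennreal ((\<Prod>s\<in>I. \<phi> s (eps s \<omega>)) * \<psi> (x r \<omega>)) \<partial>M)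
       = (\<Prod>s\<in>I. \<integral>\<^sup>+\<omega>. ennreal (\<phi> s (eps s \<omega>)) \<partial>M) * (\<integral>\<^sup>+\<omega>. ennreal (\<psi> (x r \<omega>)) \<partial>M)"
proof -
  have "indep_var borel ((\<lambda>f. \<psi> (f r)) \<circ> path x) borel ((\<lambda>f. \<Prod>s\<in>I. \<phi> s (f s)) \<circ> path eps)"
    by (rule indep_var_compose[OF x_eps_indep]) measurable
  then have iv: "indep_var borel (\<lambda>\<omega>. \<psi> (x r \<omega>)) borel (\<lambda>\<omega>. \<Prod>s\<in>I. \<phi> s (eps s \<omega>))"
    by (simp add: o_def path_def)
  have ivs: "indep_vars (\<lambda>_. borel) (\<lambda>s \<omega>. ennreal (\<phi> s (eps s \<omega>))) I"
    by (rule indep_vars_subset[OF indep_vars_compose2[OF eps_indep]]) auto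
  have "(\<integral>\<^sup>+\<omega>. ennreal ((\<Prod>s\<in>I. \<phi> s (eps s \<omega>)) * \<psi> (x r \<omega>)) \<partial>M)
      = (\<integral>\<^sup>+\<omega>. ennreal (\<psi> (x r \<omega>) * (\<Prod>s\<in>I. \<phi> s (eps s \<omega>))) \<partial>M)"
    by (simp add: mult.commute)
  also have "\<dots> = (\<integral>\<^sup>+\<omega>. ennreal (\<psi> (x r \<omega>)) \<partial>M) * (\<integral>\<^sup>+\<omega>. ennreal (\<Prod>s\<in>I. \<phi> s (eps s \<omega>)) \<partial>M)"
    by (rule indep_var_nn_integral[OF iv]) (auto simp: \<psi> \<phi> prod_nonneg)
  also have "(\<integral>\<^sup>+\<omega>. ennreal (\<Prod>s\<in>I. \<phi> s (eps s \<omega>)) \<partial>M) = (\<Prod>s\<in>I. \<integral>\<^sup>+\<omega>. ennreal (\<phi> s (eps s \<omega>)) \<partial>M)"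
    using indep_vars_nn_integral[OF I ivs] by (simp add: prod_ennreal \<phi>)
  finally show ?thesis by (simp add: mult.commute)
qed

subsection \<open>Moments of the causal terms\<close>

abbreviation cterm :: "int \<Rightarrow> nat \<Rightarrow> 'a \<Rightarrow> real" where
  "cterm t k \<omega> \<equiv> causal_term_path g u c (path eps \<omega>) (path x \<omega>) t k"

lemma measurable_cterm[measurable]: "(\<lambda>\<omega>. cterm t k \<omega>) \<in> borel_measurable M"
proof -
  have "(\<lambda>\<omega>. causal_term_path g u c (snd (path x \<omega>, path eps \<omega>)) (fst (path x \<omega>, path eps \<omega>)) t k)
      \<in> borel_measurable M"
    by measurable
  then show ?thesis by simp
qed

lemma cterm_nonneg: "0 \<le> cterm t k \<omega>"
  using g_nonneg u_nonneg c_nonneg by (rule causal_term_path_nonneg)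

definition "moment_c = (\<integral>\<^sup>+\<omega>. ennreal (c (eps 0 \<omega>) powr \<alpha>) \<partial>M)"
definition "moment_g = (\<integral>\<^sup>+\<omega>. ennreal (g (eps 0 \<omega>) powr \<alpha>) \<partial>M)"
definition "moment_u = (\<integral>\<^sup>+\<omega>. ennreal (u (x 0 \<omega>) powr \<alpha>) \<partial>M)"

lemma moment_c_eq: "moment_c = ennreal (integral\<^sup>L M (\<lambda>\<omega>. c (eps 0 \<omega>) powr \<alpha>))"
  unfolding moment_c_def using mom_c by (intro nn_integral_eq_integral) auto

lemma moment_g_finite: "moment_g < \<infinity>"
proof -
  have "moment_g = ennreal (integral\<^sup>L M (\<lambda>\<omega>. g (eps 0 \<omega>) powr \<alpha>))"
    unfolding moment_g_def using mom_g by (intro nn_integral_eq_integral) auto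
  then show ?thesis by simp
qed

lemma moment_u_finite: "moment_u < \<infinity>"
proof -
  have "moment_u = ennreal (integral\<^sup>L M (\<lambda>\<omega>. u (x 0 \<omega>) powr \<alpha>))"
    unfolding moment_u_def using mom_u by (intro nn_integral_eq_integral) auto
  then show ?thesis by simp
qed

lemma suminf_moment_c_power_finite: "(\<Sum>k. moment_c ^ k) < \<infinity>"
proof -
  define \<rho> where "\<rho> = integral\<^sup>L M (\<lambda>\<omega>. c (eps 0 \<omega>) powr \<alpha>)"
  have \<rho>: "0 \<le> \<rho>" "\<rho> < 1"
    unfolding \<rho>_def using mom_c by (auto intro!: integral_nonneg_AE)
  have "(\<Sum>k. moment_c ^ k) = (\<Sum>k. ennreal (\<rho> ^ k))" by (simp add: moment_c_eq \<rho>_def ennreal_power)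
  also have "\<dots> = ennreal (1 / (1 - \<rho>))"
    using \<rho> by (intro suminf_ennreal_eq geometric_sums) auto
  finally show ?thesis by simp
qed

definition lag_set :: "int \<Rightarrow> nat \<Rightarrow> int set" where
  "lag_set t k = (\<lambda>j. t - 1 - int j) ` {..<k}"

lemma lag_set: "finite (lag_set t k)" "card (lag_set t k) = k" "t \<notin> lag_set t k" "t - 1 - int k \<notin> lag_set t k"
proof -
  have inj: "inj_on (\<lambda>j. t - 1 - int j) {..<k}" by (auto simp: inj_on_def)
  show "finite (lag_set t k)" by (simp add: lag_set_def)
  show "card (lag_set t k) = k" by (simp add: lag_set_def card_image[OF inj])
  show "t \<notin> lag_set t k" "t - 1 - int k \<notin> lag_set t k" by (auto simp: lag_set_def)
qed

lemma prod_lag_set: "(\<Prod>j<k. F (t - 1 - int j)) = (\<Prod>s\<in>lag_set t k. F s)"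
proof -
  have "inj_on (\<lambda>j. t - 1 - int j) {..<k}" by (auto simp: inj_on_def)
  then show ?thesis unfolding lag_set_def by (simp add: prod.reindex)
qed

text \<open>The weight \<open>w\<close> at the current time and the factors at the lags belong to distinct, hence
  independent, innovations.\<close>
lemma nn_integral_weighted_lag_product:
  fixes w v \<psi> :: "real \<Rightarrow> real"
  assumes [measurable]: "w \<in> borel_measurable borel" "v \<in> borel_measurable borel" "\<psi> \<in> borel_measurable borel"
    and nonneg: "\<And>z. 0 \<le> w z" "\<And>z. 0 \<le> v z" "\<And>z. 0 \<le> \<psi> z"
    and I: "finite I" "t \<notin> I" "r \<notin> I" "t \<noteq> r"
  shows "(\<integral>\<^sup>+\<omega>. ennreal (w (eps t \<omega>) * ((\<Prod>s\<in>I. c (eps s \<omega>) powr \<alpha>) * v (eps r \<omega>)) * \<psi> (x q \<omega>)) \<partial>M)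
       = (\<integral>\<^sup>+\<omega>. ennreal (w (eps 0 \<omega>)) \<partial>M) * moment_c ^ card I * (\<integral>\<^sup>+\<omega>. ennreal (v (eps 0 \<omega>)) \<partial>M)
         * (\<integral>\<^sup>+\<omega>. ennreal (\<psi> (x 0 \<omega>)) \<partial>M)"
proof -
  define \<phi> where "\<phi> s z = (if s = t then w z else if s = r then v z else c z powr \<alpha>)" for s z
  have [measurable]: "\<phi> s \<in> borel_measurable borel" for s unfolding \<phi>_def by measurable
  have \<phi>_nonneg: "0 \<le> \<phi> s z" for s z unfolding \<phi>_def using nonneg by auto
  have \<phi>_I: "(\<Prod>s\<in>I. \<phi> s (eps s \<omega>)) = (\<Prod>s\<in>I. c (eps s \<omega>) powr \<alpha>)" for \<omega>
    using I by (intro prod.cong) (auto simp: \<phi>_def)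
  have \<phi>_c: "\<phi> s z = c z powr \<alpha>" if "s \<in> I" for s z
    using that I by (auto simp: \<phi>_def)
  have \<phi>_int_I: "(\<Prod>s\<in>I. \<integral>\<^sup>+\<omega>. ennreal (\<phi> s (eps s \<omega>)) \<partial>M) = moment_c ^ card I"
  proof -
    have "(\<Prod>s\<in>I. \<integral>\<^sup>+\<omega>. ennreal (\<phi> s (eps s \<omega>)) \<partial>M) = (\<Prod>s\<in>I. \<integral>\<^sup>+\<omega>. ennreal (c (eps s \<omega>) powr \<alpha>) \<partial>M)"
      by (intro prod.cong refl nn_integral_cong) (simp add: \<phi>_c)
    also have "\<dots> = (\<Prod>s\<in>I. moment_c)"
      unfolding moment_c_def by (intro prod.cong refl nn_integral_eps_eq) measurable
    finally show ?thesis by simp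
  qed
  have "(\<integral>\<^sup>+\<omega>. ennreal (w (eps t \<omega>) * ((\<Prod>s\<in>I. c (eps s \<omega>) powr \<alpha>) * v (eps r \<omega>)) * \<psi> (x q \<omega>)) \<partial>M)
      = (\<integral>\<^sup>+\<omega>. ennreal ((\<Prod>s\<in>insert t (insert r I). \<phi> s (eps s \<omega>)) * \<psi> (x q \<omega>)) \<partial>M)"
    using I by (simp add: \<phi>_I) (simp add: \<phi>_def mult_ac)
  also have "\<dots> = (\<Prod>s\<in>insert t (insert r I). \<integral>\<^sup>+\<omega>. ennreal (\<phi> s (eps s \<omega>)) \<partial>M) * (\<integral>\<^sup>+\<omega>. ennreal (\<psi> (x q \<omega>)) \<partial>M)"
    using I \<phi>_nonneg nonneg by (intro nn_integral_prod_eps_mult_x) auto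
  also have "\<dots> = (\<integral>\<^sup>+\<omega>. ennreal (w (eps 0 \<omega>)) \<partial>M) * moment_c ^ card I * (\<integral>\<^sup>+\<omega>. ennreal (v (eps 0 \<omega>)) \<partial>M)
         * (\<integral>\<^sup>+\<omega>. ennreal (\<psi> (x 0 \<omega>)) \<partial>M)"
  proof -
    have "(\<integral>\<^sup>+\<omega>. ennreal (w (eps t \<omega>)) \<partial>M) = (\<integral>\<^sup>+\<omega>. ennreal (w (eps 0 \<omega>)) \<partial>M)"
      "(\<integral>\<^sup>+\<omega>. ennreal (v (eps r \<omega>)) \<partial>M) = (\<integral>\<^sup>+\<omega>. ennreal (v (eps 0 \<omega>)) \<partial>M)"
      "(\<integral>\<^sup>+\<omega>. ennreal (\<psi> (x q \<omega>)) \<partial>M) = (\<integral>\<^sup>+\<omega>. ennreal (\<psi> (x 0 \<omega>)) \<partial>M)"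
      by (intro nn_integral_eps_eq nn_integral_x_eq; measurable)+
    then show ?thesis using I \<phi>_int_I by (simp add: \<phi>_def mult_ac)
  qed
  finally show ?thesis .
qed

lemma cterm_powr_le:
  "cterm t k \<omega> powr \<alpha> \<le> (\<Prod>s\<in>lag_set t k. c (eps s \<omega>) powr \<alpha>) *
     (g (eps (t - 1 - int k) \<omega>) powr \<alpha> + u (x (t - 1 - int k) \<omega>) powr \<alpha>)"
proof -
  have "cterm t k \<omega> powr \<alpha> = (\<Prod>s\<in>lag_set t k. c (eps s \<omega>) powr \<alpha>) *
      (g (eps (t - 1 - int k) \<omega>) + u (x (t - 1 - int k) \<omega>)) powr \<alpha>"
    by (simp add: causal_term_path_def path_def powr_mult prod_powr_distrib
        prod_lag_set[where F="\<lambda>s. c (eps s \<omega>) powr \<alpha>"])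
  also have "\<dots> \<le> (\<Prod>s\<in>lag_set t k. c (eps s \<omega>) powr \<alpha>) *
      (g (eps (t - 1 - int k) \<omega>) powr \<alpha> + u (x (t - 1 - int k) \<omega>) powr \<alpha>)"
    using g_nonneg u_nonneg alpha by (intro mult_left_mono powr_add_le_add_powr prod_nonneg) auto
  finally show ?thesis .
qed

lemma nn_integral_weighted_cterm_powr_le:
  fixes w :: "real \<Rightarrow> real"
  assumes [measurable]: "w \<in> borel_measurable borel" and w: "\<And>v. 0 \<le> w v"
  shows "(\<integral>\<^sup>+\<omega>. ennreal (w (eps t \<omega>) * cterm t k \<omega> powr \<alpha>) \<partial>M)
      \<le> (\<integral>\<^sup>+\<omega>. ennreal (w (eps 0 \<omega>)) \<partial>M) * moment_c ^ k * (moment_g + moment_u)"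
proof -
  define r where "r = t - 1 - int k"
  define P where "P \<omega> = (\<Prod>s\<in>lag_set t k. c (eps s \<omega>) powr \<alpha>)" for \<omega>
  have I: "finite (lag_set t k)" "t \<notin> lag_set t k" "r \<notin> lag_set t k" "t \<noteq> r"
    using lag_set by (auto simp: r_def)
  have "ennreal (w (eps t \<omega>) * cterm t k \<omega> powr \<alpha>)
      \<le> ennreal (w (eps t \<omega>) * (P \<omega> * g (eps r \<omega>) powr \<alpha>) * 1)
        + ennreal (w (eps t \<omega>) * (P \<omega> * 1) * u (x r \<omega>) powr \<alpha>)" for \<omega>
  proof -
    have "w (eps t \<omega>) * cterm t k \<omega> powr \<alpha> \<le> w (eps t \<omega>) * (P \<omega> * (g (eps r \<omega>) powr \<alpha> + u (x r \<omega>) powr \<alpha>))"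
      using cterm_powr_le[where t=t and k=k and \<omega>=\<omega>] w unfolding P_def r_def by (intro mult_left_mono) auto
    then show ?thesis
      using w by (simp add: P_def prod_nonneg algebra_simps flip: ennreal_plus)
  qed
  then have "(\<integral>\<^sup>+\<omega>. ennreal (w (eps t \<omega>) * cterm t k \<omega> powr \<alpha>) \<partial>M)
      \<le> (\<integral>\<^sup>+\<omega>. ennreal (w (eps t \<omega>) * (P \<omega> * g (eps r \<omega>) powr \<alpha>) * 1)
        + ennreal (w (eps t \<omega>) * (P \<omega> * 1) * u (x r \<omega>) powr \<alpha>) \<partial>M)"
    by (rule nn_integral_mono)
  also have "\<dots> = (\<integral>\<^sup>+\<omega>. ennreal (w (eps t \<omega>) * (P \<omega> * g (eps r \<omega>) powr \<alpha>) * 1) \<partial>M)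
        + (\<integral>\<^sup>+\<omega>. ennreal (w (eps t \<omega>) * (P \<omega> * 1) * u (x r \<omega>) powr \<alpha>) \<partial>M)"
    unfolding P_def by (rule nn_integral_add) measurable
  also have "(\<integral>\<^sup>+\<omega>. ennreal (w (eps t \<omega>) * (P \<omega> * g (eps r \<omega>) powr \<alpha>) * 1) \<partial>M)
      = (\<integral>\<^sup>+\<omega>. ennreal (w (eps 0 \<omega>)) \<partial>M) * moment_c ^ card (lag_set t k)
        * (\<integral>\<^sup>+\<omega>. ennreal (g (eps 0 \<omega>) powr \<alpha>) \<partial>M) * (\<integral>\<^sup>+\<omega>. ennreal 1 \<partial>M)"
    unfolding P_def by (rule nn_integral_weighted_lag_product) (use I w in auto)
  also have "(\<integral>\<^sup>+\<omega>. ennreal (w (eps t \<omega>) * (P \<omega> * 1) * u (x r \<omega>) powr \<alpha>) \<partial>M)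
      = (\<integral>\<^sup>+\<omega>. ennreal (w (eps 0 \<omega>)) \<partial>M) * moment_c ^ card (lag_set t k)
        * (\<integral>\<^sup>+\<omega>. ennreal 1 \<partial>M) * (\<integral>\<^sup>+\<omega>. ennreal (u (x 0 \<omega>) powr \<alpha>) \<partial>M)"
    unfolding P_def by (rule nn_integral_weighted_lag_product) (use I w in auto)
  finally show ?thesis
    by (simp add: lag_set moment_g_def moment_u_def emeasure_space_1 distrib_left)
qed


subsection \<open>The causal solution\<close>

definition "powr_series t \<omega> = (\<Sum>k. ennreal (cterm t k \<omega> powr \<alpha>))"

lemma measurable_powr_series[measurable]: "powr_series t \<in> borel_measurable M"
  unfolding powr_series_def by measurable

lemma nn_integral_weighted_powr_series_finite:
  fixes w :: "real \<Rightarrow> real"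
  assumes [measurable]: "w \<in> borel_measurable borel" and w: "\<And>v. 0 \<le> w v"
    and finite: "(\<integral>\<^sup>+\<omega>. ennreal (w (eps 0 \<omega>)) \<partial>M) < \<infinity>"
  shows "(\<integral>\<^sup>+\<omega>. ennreal (w (eps t \<omega>)) * powr_series t \<omega> \<partial>M) < \<infinity>"
proof -
  have "(\<integral>\<^sup>+\<omega>. ennreal (w (eps t \<omega>)) * powr_series t \<omega> \<partial>M)
      = (\<integral>\<^sup>+\<omega>. (\<Sum>k. ennreal (w (eps t \<omega>) * cterm t k \<omega> powr \<alpha>)) \<partial>M)"
    unfolding powr_series_def using w by (simp add: ennreal_mult)
  also have "\<dots> = (\<Sum>k. \<integral>\<^sup>+\<omega>. ennreal (w (eps t \<omega>) * cterm t k \<omega> powr \<alpha>) \<partial>M)"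
    by (rule nn_integral_suminf) measurable
  also have "\<dots> \<le> (\<Sum>k. (\<integral>\<^sup>+\<omega>. ennreal (w (eps 0 \<omega>)) \<partial>M) * (moment_g + moment_u) * moment_c ^ k)"
    by (intro suminf_le nn_integral_weighted_cterm_powr_le[OF _ w, THEN order_trans])
      (auto simp: algebra_simps)
  also have "\<dots> = (\<integral>\<^sup>+\<omega>. ennreal (w (eps 0 \<omega>)) \<partial>M) * (moment_g + moment_u) * (\<Sum>k. moment_c ^ k)"
    by simp
  also have "\<dots> < \<infinity>"
    using finite moment_g_finite moment_u_finite suminf_moment_c_power_finite
    by (simp add: ennreal_mult_less_top)
  finally show ?thesis .
qed

lemma AE_summable_cterm: "AE \<omega> in M. summable (\<lambda>k. cterm t k \<omega>)"
proof -
  have "(\<integral>\<^sup>+\<omega>. powr_series t \<omega> \<partial>M) < \<infinity>"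
    using nn_integral_weighted_powr_series_finite[of "\<lambda>_. 1" t] by (simp add: emeasure_space_1)
  then have "AE \<omega> in M. powr_series t \<omega> \<noteq> \<infinity>"
    by (intro nn_integral_PInf_AE) auto
  then show ?thesis
    unfolding powr_series_def
    by (rule eventually_mono) (rule summable_of_suminf_ennreal_powr_finite[OF cterm_nonneg alpha])
qed

definition "sol_sigma t \<omega> = causal_sigma \<delta> g u c (path eps \<omega>) (path x \<omega>) t"
definition "sol_R t \<omega> = sol_sigma t \<omega> * eps t \<omega>"

lemma measurable_sol_sigma[measurable]: "sol_sigma t \<in> borel_measurable M"
proof -
  have "(\<lambda>\<omega>. causal_sigma \<delta> g u c (snd (path x \<omega>, path eps \<omega>)) (fst (path x \<omega>, path eps \<omega>)) t)
      \<in> borel_measurable M"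
    by measurable
  then show ?thesis by (simp add: sol_sigma_def[abs_def])
qed

lemma measurable_sol_R[measurable]: "sol_R t \<in> borel_measurable M"
  unfolding sol_R_def by measurable

lemma sol_sigma_nonneg: "0 \<le> sol_sigma t \<omega>"
  by (simp add: sol_sigma_def causal_sigma_def)

lemma causal_sum_nonneg:
  "summable (\<lambda>k. cterm t k \<omega>) \<Longrightarrow> 0 \<le> causal_sum g u c (path eps \<omega>) (path x \<omega>) t"
  unfolding causal_sum_def by (intro suminf_nonneg cterm_nonneg)

lemma sol_sigma_powr:
  assumes "summable (\<lambda>k. cterm t k \<omega>)" "0 < p"
  shows "sol_sigma t \<omega> powr p = causal_sum g u c (path eps \<omega>) (path x \<omega>) t powr (p / \<delta>)"
  using assms delta_pos causal_sum_nonneg[OF assms(1)]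
  by (simp add: sol_sigma_def causal_sigma_def powr_powr)

lemma sol_sigma_powr_delta:
  "summable (\<lambda>k. cterm t k \<omega>) \<Longrightarrow> sol_sigma t \<omega> powr \<delta> = causal_sum g u c (path eps \<omega>) (path x \<omega>) t"
  using sol_sigma_powr[where p=\<delta>] delta_pos causal_sum_nonneg by simp

lemma sol_sigma_powr_le_powr_series: "ennreal (sol_sigma t \<omega> powr (\<alpha> * \<delta>)) \<le> powr_series t \<omega>"
proof (cases "summable (\<lambda>k. cterm t k \<omega>)")
  case False
  then show ?thesis by (simp add: sol_sigma_def causal_sigma_def)
next
  case True
  then have "sol_sigma t \<omega> powr (\<alpha> * \<delta>) = (\<Sum>k. cterm t k \<omega>) powr \<alpha>"
    using sol_sigma_powr[OF True, of "\<alpha> * \<delta>"] alpha delta_pos by (simp add: causal_sum_def)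
  then show ?thesis
    unfolding powr_series_def using powr_suminf_le_suminf_powr[OF cterm_nonneg alpha True] by simp
qed

lemma integrable_sol_R_powr: "integrable M (\<lambda>\<omega>. \<bar>sol_R t \<omega>\<bar> powr (\<alpha> * \<delta>))"
proof (rule integrableI_nonneg)
  have "(\<integral>\<^sup>+\<omega>. ennreal (\<bar>sol_R t \<omega>\<bar> powr (\<alpha> * \<delta>)) \<partial>M)
      \<le> (\<integral>\<^sup>+\<omega>. ennreal (\<bar>eps t \<omega>\<bar> powr (\<delta> * \<alpha>)) * powr_series t \<omega> \<partial>M)"
  proof (rule nn_integral_mono)
    fix \<omega>
    have "ennreal (\<bar>sol_R t \<omega>\<bar> powr (\<alpha> * \<delta>))
        = ennreal (\<bar>eps t \<omega>\<bar> powr (\<delta> * \<alpha>)) * ennreal (sol_sigma t \<omega> powr (\<alpha> * \<delta>))"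
      using sol_sigma_nonneg[of t \<omega>] by (simp add: sol_R_def abs_mult powr_mult mult.commute ennreal_mult)
    also have "\<dots> \<le> ennreal (\<bar>eps t \<omega>\<bar> powr (\<delta> * \<alpha>)) * powr_series t \<omega>"
      by (intro mult_left_mono sol_sigma_powr_le_powr_series) auto
    finally show "ennreal (\<bar>sol_R t \<omega>\<bar> powr (\<alpha> * \<delta>)) \<le> ennreal (\<bar>eps t \<omega>\<bar> powr (\<delta> * \<alpha>)) * powr_series t \<omega>" .
  qed
  also have "\<dots> < \<infinity>"
  proof (rule nn_integral_weighted_powr_series_finite)
    have "(\<integral>\<^sup>+\<omega>. ennreal (\<bar>eps 0 \<omega>\<bar> powr (\<delta> * \<alpha>)) \<partial>M) = ennreal (integral\<^sup>L M (\<lambda>\<omega>. \<bar>eps 0 \<omega>\<bar> powr (\<delta> * \<alpha>)))"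
      using mom_eps by (intro nn_integral_eq_integral) auto
    then show "(\<integral>\<^sup>+\<omega>. ennreal (\<bar>eps 0 \<omega>\<bar> powr (\<delta> * \<alpha>)) \<partial>M) < \<infinity>" by simp
  qed auto
  finally show "(\<integral>\<^sup>+\<omega>. ennreal (\<bar>sol_R t \<omega>\<bar> powr (\<alpha> * \<delta>)) \<partial>M) < \<infinity>" .
qed auto

lemma model_solution_sol: "model_solution M \<delta> g u c eps x sol_R sol_sigma"
  unfolding model_solution_def
proof (intro conjI allI)
  show "sol_R t \<in> borel_measurable M" "sol_sigma t \<in> borel_measurable M" for t by simp_all
  fix t :: int
  show "AE \<omega> in M. 0 \<le> sol_sigma t \<omega> \<and> sol_R t \<omega> = sol_sigma t \<omega> * eps t \<omega> \<and>
     sol_sigma t \<omega> powr \<delta> = g (eps (t - 1) \<omega>) + u (x (t - 1) \<omega>) + c (eps (t - 1) \<omega>) * sol_sigma (t - 1) \<omega> powr \<delta>"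
    using AE_summable_cterm[of "t - 1"]
  proof (rule eventually_mono)
    fix \<omega>
    assume s: "summable (\<lambda>k. cterm (t - 1) k \<omega>)"
    note rec = causal_sum_recursion[of g u c "path eps \<omega>" "path x \<omega>" t, simplified, OF s]
    show "0 \<le> sol_sigma t \<omega> \<and> sol_R t \<omega> = sol_sigma t \<omega> * eps t \<omega> \<and>
        sol_sigma t \<omega> powr \<delta> = g (eps (t - 1) \<omega>) + u (x (t - 1) \<omega>) + c (eps (t - 1) \<omega>) * sol_sigma (t - 1) \<omega> powr \<delta>"
      using rec sol_sigma_powr_delta[OF s] sol_sigma_powr_delta[where t=t and \<omega>=\<omega>]
      by (simp add: sol_sigma_nonneg sol_R_def path_def)
  qed
qed

lemma causal_representation:
  "AE \<omega> in M. sol_R t \<omega> = sol_sigma t \<omega> * eps t \<omega> \<and>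
     summable (\<lambda>k. causal_term g u c eps x t (Suc k) \<omega>) \<and>
     sol_sigma t \<omega> powr \<delta> = g (eps (t - 1) \<omega>) + u (x (t - 1) \<omega>) + (\<Sum>k. causal_term g u c eps x t (Suc k) \<omega>)"
  using AE_summable_cterm[of t]
proof (rule eventually_mono)
  fix \<omega>
  assume s: "summable (\<lambda>k. cterm t k \<omega>)"
  then show "sol_R t \<omega> = sol_sigma t \<omega> * eps t \<omega> \<and>
     summable (\<lambda>k. causal_term g u c eps x t (Suc k) \<omega>) \<and>
     sol_sigma t \<omega> powr \<delta> = g (eps (t - 1) \<omega>) + u (x (t - 1) \<omega>) + (\<Sum>k. causal_term g u c eps x t (Suc k) \<omega>)"
    using sol_sigma_powr_delta[OF s] causal_sum_split_head[of g u c "path eps \<omega>" "path x \<omega>" t]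
    by (simp add: causal_term_eq_causal_term_path sol_R_def summable_Suc_iff path_def)
qed

definition solution_map :: "(int \<Rightarrow> real) \<times> (int \<Rightarrow> real) \<Rightarrow> int \<Rightarrow> real \<times> real" where
  "solution_map p = (\<lambda>t. (causal_sigma \<delta> g u c (snd p) (fst p) t * snd p t, causal_sigma \<delta> g u c (snd p) (fst p) t))"

lemma measurable_solution_map[measurable]:
  "solution_map \<in> measurable (path_space \<Otimes>\<^sub>M path_space) (PiM UNIV (\<lambda>_. borel))"
  unfolding solution_map_def by (rule measurable_PiM_single') (auto simp: space_PiM)

lemma path_sol: "path (\<lambda>t \<omega>. (sol_R t \<omega>, sol_sigma t \<omega>)) = (\<lambda>\<omega>. solution_map (path x \<omega>, path eps \<omega>))"
  by (simp add: fun_eq_iff path_def solution_map_def sol_R_def sol_sigma_def)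

lemma solution_map_shift: "solution_map (shift_pair h p) = shift_path h (solution_map p)"
  by (simp add: fun_eq_iff solution_map_def shift_pair_def causal_sigma_shift) (simp add: shift_path_def)

lemma distr_path_sol_shift:
  "distr M (PiM UNIV (\<lambda>_. borel)) (path (\<lambda>t \<omega>. (sol_R (t + h) \<omega>, sol_sigma (t + h) \<omega>)))
     = distr joint_law (PiM UNIV (\<lambda>_. borel)) solution_map"
proof -
  have "path (\<lambda>t \<omega>. (sol_R (t + h) \<omega>, sol_sigma (t + h) \<omega>))
      = solution_map \<circ> (\<lambda>\<omega>. shift_pair h (path x \<omega>, path eps \<omega>))"
    using path_shift[of "\<lambda>t \<omega>. (sol_R t \<omega>, sol_sigma t \<omega>)" h] by (simp add: path_sol solution_map_shift o_def)
  then have "distr M (PiM UNIV (\<lambda>_. borel)) (path (\<lambda>t \<omega>. (sol_R (t + h) \<omega>, sol_sigma (t + h) \<omega>)))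
      = distr (distr M (path_space \<Otimes>\<^sub>M path_space) (\<lambda>\<omega>. shift_pair h (path x \<omega>, path eps \<omega>)))
          (PiM UNIV (\<lambda>_. borel)) solution_map"
    by (simp only:) (rule distr_distr[symmetric]; measurable)
  then show ?thesis by (simp only: distr_shift_pair_paths)
qed

lemma sol_stationary: "strictly_stationary M borel (\<lambda>t \<omega>. (sol_R t \<omega>, sol_sigma t \<omega>))"
  unfolding strictly_stationary_def
  using distr_path_sol_shift[of 0] by (simp add: distr_path_sol_shift)


subsection \<open>Uniqueness\<close>

definition "coeff_prod t n \<omega> = (\<Prod>j<n. c (eps (t - 1 - int j) \<omega>))"

lemma measurable_coeff_prod[measurable]: "coeff_prod t n \<in> borel_measurable M"
  unfolding coeff_prod_def by measurable

lemma coeff_prod_nonneg: "0 \<le> coeff_prod t n \<omega>"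
  unfolding coeff_prod_def using c_nonneg by (auto intro: prod_nonneg)

lemma AE_coeff_prod_tendsto_zero: "AE \<omega> in M. (\<lambda>n. coeff_prod t n \<omega>) \<longlonglongrightarrow> 0"
proof -
  have int: "(\<integral>\<^sup>+\<omega>. ennreal (coeff_prod t n \<omega> powr \<alpha>) \<partial>M) = moment_c ^ n" for n
  proof -
    have I: "finite (lag_set t n)" "t \<notin> lag_set t n" "t - 1 - int n \<notin> lag_set t n" "t \<noteq> t - 1 - int n"
      using lag_set by auto
    have "coeff_prod t n \<omega> powr \<alpha> = 1 * ((\<Prod>s\<in>lag_set t n. c (eps s \<omega>) powr \<alpha>) * 1) * 1" for \<omega>
      by (simp add: coeff_prod_def prod_powr_distrib prod_lag_set[where F="\<lambda>s. c (eps s \<omega>) powr \<alpha>"])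
    then have "(\<integral>\<^sup>+\<omega>. ennreal (coeff_prod t n \<omega> powr \<alpha>) \<partial>M)
        = (\<integral>\<^sup>+\<omega>. ennreal 1 \<partial>M) * moment_c ^ card (lag_set t n) * (\<integral>\<^sup>+\<omega>. ennreal 1 \<partial>M) * (\<integral>\<^sup>+\<omega>. ennreal 1 \<partial>M)"
      using nn_integral_weighted_lag_product[where w="\<lambda>_. 1" and v="\<lambda>_. 1" and \<psi>="\<lambda>_. 1", OF _ _ _ _ _ _ I]
      by simp
    then show ?thesis by (simp add: lag_set emeasure_space_1)
  qed
  have "(\<integral>\<^sup>+\<omega>. (\<Sum>n. ennreal (coeff_prod t n \<omega> powr \<alpha>)) \<partial>M) = (\<Sum>n. moment_c ^ n)"
    by (subst nn_integral_suminf) (measurable, simp add: int)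
  then have "AE \<omega> in M. (\<Sum>n. ennreal (coeff_prod t n \<omega> powr \<alpha>)) \<noteq> \<infinity>"
    using suminf_moment_c_power_finite by (intro nn_integral_PInf_AE) auto
  then show ?thesis
    by (rule eventually_mono)
      (rule summable_LIMSEQ_zero, rule summable_of_suminf_ennreal_powr_finite[OF coeff_prod_nonneg alpha])
qed

lemma model_solution_iterate:
  assumes sol: "model_solution M \<delta> g u c eps x R' \<sigma>'"
  shows "AE \<omega> in M. \<sigma>' t \<omega> powr \<delta> = (\<Sum>k<n. cterm t k \<omega>) + coeff_prod t n \<omega> * \<sigma>' (t - int n) \<omega> powr \<delta>"
proof (induction n)
  case 0
  then show ?case by (simp add: coeff_prod_def)
next
  case (Suc n)
  have "AE \<omega> in M. \<sigma>' (t - int n) \<omega> powr \<delta> = g (eps (t - int n - 1) \<omega>) + u (x (t - int n - 1) \<omega>)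
       + c (eps (t - int n - 1) \<omega>) * \<sigma>' (t - int n - 1) \<omega> powr \<delta>"
    using sol unfolding model_solution_def by (auto elim!: allE[of _ "t - int n"] elim: eventually_mono)
  with Suc show ?case
  proof eventually_elim
    case (elim \<omega>)
    have "cterm t n \<omega> = coeff_prod t n \<omega> * (g (eps (t - int n - 1) \<omega>) + u (x (t - int n - 1) \<omega>))"
      "coeff_prod t (Suc n) \<omega> = coeff_prod t n \<omega> * c (eps (t - int n - 1) \<omega>)"
      by (simp_all add: causal_term_path_def coeff_prod_def path_def algebra_simps)
    moreover have "t - int (Suc n) = t - int n - 1" by simp
    ultimately show ?case using elim by (simp add: algebra_simps)
  qed
qed

lemma stationary_solution_powr_ident_distr:
  fixes R' \<sigma>' :: "int \<Rightarrow> 'a \<Rightarrow> real"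
  assumes "strictly_stationary M borel (\<lambda>t \<omega>. (R' t \<omega>, \<sigma>' t \<omega>))"
  shows "distr M borel (\<lambda>\<omega>. \<sigma>' s \<omega> powr \<delta>) = distr M borel (\<lambda>\<omega>. \<sigma>' 0 \<omega> powr \<delta>)"
proof -
  have m: "(\<lambda>\<omega>. (R' r \<omega>, \<sigma>' r \<omega>)) \<in> borel_measurable M" for r
    using assms by (simp add: strictly_stationary_def)
  have "distr M borel (\<lambda>\<omega>. \<sigma>' r \<omega> powr \<delta>)
      = distr (distr M borel (\<lambda>\<omega>. (R' r \<omega>, \<sigma>' r \<omega>))) borel (\<lambda>p. snd p powr \<delta>)" for r
  proof -
    have "(\<lambda>p::real \<times> real. snd p powr \<delta>) \<in> borel_measurable (borel \<Otimes>\<^sub>M borel)" by measurable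
    then show ?thesis using m[of r] by (subst distr_distr) (auto simp: o_def borel_prod)
  qed
  then show ?thesis using strictly_stationary_distr_eq[OF assms, of s] by simp
qed

lemma stationary_solution_powr_eq_causal_sum:
  fixes R' \<sigma>' :: "int \<Rightarrow> 'a \<Rightarrow> real"
  assumes ms: "model_solution M \<delta> g u c eps x R' \<sigma>'"
    and st: "strictly_stationary M borel (\<lambda>t \<omega>. (R' t \<omega>, \<sigma>' t \<omega>))"
  shows "AE \<omega> in M. \<sigma>' t \<omega> powr \<delta> = (\<Sum>k. cterm t k \<omega>)"
proof -
  have [measurable]: "\<sigma>' s \<in> borel_measurable M" for s
    using ms by (auto simp: model_solution_def)
  define tail where "tail n \<omega> = (\<Sum>k. cterm t k \<omega>) - (\<Sum>k<n. cterm t k \<omega>)" for n \<omega>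
  define rem where "rem n \<omega> = coeff_prod t n \<omega> * \<sigma>' (t - int n) \<omega> powr \<delta>" for n \<omega>
  have [measurable]: "tail n \<in> borel_measurable M" "rem n \<in> borel_measurable M" for n
    unfolding tail_def rem_def by measurable
  have dom: "AE \<omega> in M. \<bar>\<sigma>' t \<omega> powr \<delta> - (\<Sum>k. cterm t k \<omega>)\<bar> \<le> tail n \<omega> + rem n \<omega>" for n
    using AE_summable_cterm[of t] model_solution_iterate[OF ms, of t n]
  proof eventually_elim
    case (elim \<omega>)
    have "0 \<le> tail n \<omega>"
      unfolding tail_def using sum_le_suminf[OF elim(1), of "{..<n}"] cterm_nonneg by auto
    moreover have "0 \<le> rem n \<omega>" unfolding rem_def using coeff_prod_nonneg by simp
    moreover have "\<sigma>' t \<omega> powr \<delta> - (\<Sum>k. cterm t k \<omega>) = rem n \<omega> - tail n \<omega>"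
      using elim(2) by (simp add: tail_def rem_def)
    ultimately show ?case by linarith
  qed
  have tail: "tendsto_zero_in_prob M tail"
    unfolding tail_def by (rule tendsto_zero_in_prob_suminf_tail[OF _ AE_summable_cterm]) measurable
  have rem: "tendsto_zero_in_prob M rem"
    unfolding rem_def
  proof (rule tendsto_zero_in_prob_mult_ident_distr)
    show "tendsto_zero_in_prob M (\<lambda>n. coeff_prod t n)"
      by (rule tendsto_zero_in_prob_if_AE_tendsto[OF _ AE_coeff_prod_tendsto_zero]) measurable
    show "distr M borel (\<lambda>\<omega>. \<sigma>' (t - int n) \<omega> powr \<delta>) = distr M borel (\<lambda>\<omega>. \<sigma>' (t - int 0) \<omega> powr \<delta>)" for n
      using stationary_solution_powr_ident_distr[OF st, of "t - int n"]
        stationary_solution_powr_ident_distr[OF st, of "t - int 0"] by (simp only:)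
  qed measurable
  have "AE \<omega> in M. \<sigma>' t \<omega> powr \<delta> - (\<Sum>k. cterm t k \<omega>) = 0"
    by (rule AE_zero_if_dominated_in_prob[OF _ _ dom tendsto_zero_in_prob_add[OF _ _ tail rem]]) measurable
  then show ?thesis by (rule eventually_mono) simp
qed

lemma stationary_solution_unique:
  assumes "stationary_solution_of_order M (\<alpha> * \<delta>) \<delta> g u c eps x R' \<sigma>'"
  shows "AE \<omega> in M. R' t \<omega> = sol_R t \<omega> \<and> \<sigma>' t \<omega> = sol_sigma t \<omega>"
proof -
  have ms: "model_solution M \<delta> g u c eps x R' \<sigma>'"
    and st: "strictly_stationary M borel (\<lambda>t \<omega>. (R' t \<omega>, \<sigma>' t \<omega>))"
    using assms by (auto simp: stationary_solution_of_order_def)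
  have "AE \<omega> in M. 0 \<le> \<sigma>' t \<omega> \<and> R' t \<omega> = \<sigma>' t \<omega> * eps t \<omega>"
    using ms unfolding model_solution_def by (auto elim!: allE[of _ t] elim: eventually_mono)
  with stationary_solution_powr_eq_causal_sum[OF ms st, of t] AE_summable_cterm[of t]
  show ?thesis
  proof eventually_elim
    case (elim \<omega>)
    then have eq: "\<sigma>' t \<omega> powr \<delta> = sol_sigma t \<omega> powr \<delta>"
      using sol_sigma_powr_delta by (simp add: causal_sum_def)
    have "0 \<le> \<sigma>' t \<omega>" using elim by simp
    then have "\<sigma>' t \<omega> = (\<sigma>' t \<omega> powr \<delta>) powr (1 / \<delta>)" using delta_pos by (simp add: powr_powr)
    also have "\<dots> = (sol_sigma t \<omega> powr \<delta>) powr (1 / \<delta>)" by (simp only: eq)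
    also have "\<dots> = sol_sigma t \<omega>" using sol_sigma_nonneg[of t \<omega>] delta_pos by (simp add: powr_powr)
    finally show ?case using elim by (simp add: sol_R_def)
  qed
qed


subsection \<open>Ergodicity\<close>

text \<open>Since \<open>x\<close> and \<open>eps\<close> are independent, section probabilities disintegrate the joint law over
  the law of \<open>x\<close>.\<close>
definition "section_prob S y = measure law_eps (Pair y -` S)"

lemma measurable_section_prob[measurable]:
  assumes S: "S \<in> sets (path_space \<Otimes>\<^sub>M path_space)"
  shows "section_prob S \<in> borel_measurable path_space"
proof -
  interpret Pe: prob_space law_eps by (rule prob_space_law_eps)
  have "S \<in> sets (path_space \<Otimes>\<^sub>M law_eps)" using S by simp
  then have "(\<lambda>y. emeasure law_eps (Pair y -` S)) \<in> borel_measurable path_space"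
    by (rule Pe.measurable_emeasure_Pair)
  then show ?thesis unfolding section_prob_def[abs_def] measure_def by measurable
qed

lemma section_prob_bounds: "0 \<le> section_prob S y" "section_prob S y \<le> 1"
proof -
  interpret Pe: prob_space law_eps by (rule prob_space_law_eps)
  show "0 \<le> section_prob S y" "section_prob S y \<le> 1" by (auto simp: section_prob_def)
qed

lemma integrable_section_prob_prod:
  assumes "S \<in> sets (path_space \<Otimes>\<^sub>M path_space)" "T \<in> sets (path_space \<Otimes>\<^sub>M path_space)"
  shows "integrable law_x (\<lambda>y. section_prob S y * section_prob T y)"
proof -
  interpret Px: prob_space law_x by (rule prob_space_law_x)
  show ?thesis
    using assms section_prob_bounds[of S] section_prob_bounds[of T]
    by (intro Px.integrable_const_bound[where B=1])
      (auto simp: measurable_cong_sets[OF sets_law_x refl] mult_le_one)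
qed

lemma integrable_section_prob:
  assumes "S \<in> sets (path_space \<Otimes>\<^sub>M path_space)"
  shows "integrable law_x (section_prob S)"
proof -
  interpret Px: prob_space law_x by (rule prob_space_law_x)
  show ?thesis
    using assms section_prob_bounds[of S]
    by (intro Px.integrable_const_bound[where B=1]) (auto simp: measurable_cong_sets[OF sets_law_x refl])
qed

lemma measure_joint_law_eq_integral:
  assumes S: "S \<in> sets (path_space \<Otimes>\<^sub>M path_space)"
  shows "measure joint_law S = (\<integral>y. section_prob S y \<partial>law_x)"
proof -
  interpret Pe: prob_space law_eps by (rule prob_space_law_eps)
  interpret Pj: prob_space joint_law by (rule prob_space_joint_law)
  have "emeasure joint_law S = (\<integral>\<^sup>+y. emeasure law_eps (Pair y -` S) \<partial>law_x)"
    unfolding joint_law_eq_pair_measure using S by (intro Pe.emeasure_pair_measure_alt) simp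
  also have "\<dots> = (\<integral>\<^sup>+y. ennreal (section_prob S y) \<partial>law_x)"
    by (intro nn_integral_cong) (simp add: section_prob_def Pe.emeasure_eq_measure)
  also have "\<dots> = ennreal (\<integral>y. section_prob S y \<partial>law_x)"
    using integrable_section_prob[OF S] section_prob_bounds by (intro nn_integral_eq_integral AE_I2) auto
  finally show ?thesis
    using section_prob_bounds[of S] by (simp add: Pj.emeasure_eq_measure integral_nonneg_AE)
qed

lemma section_prob_diff_le:
  assumes "S \<in> sets (path_space \<Otimes>\<^sub>M path_space)" "T \<in> sets (path_space \<Otimes>\<^sub>M path_space)"
  shows "\<bar>section_prob S y - section_prob T y\<bar> \<le> section_prob (sym_diff S T) y"
proof -
  interpret Pe: prob_space law_eps by (rule prob_space_law_eps)
  have "Pair y -` sym_diff S T = sym_diff (Pair y -` S) (Pair y -` T)" by auto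
  moreover have "Pair y -` S \<in> sets law_eps" "Pair y -` T \<in> sets law_eps"
    using sets_Pair1[OF assms(1)] sets_Pair1[OF assms(2)] by auto
  ultimately show ?thesis unfolding section_prob_def using Pe.measure_diff_le_symdiff by simp
qed

lemma sets_vimage_shift_pair:
  "B \<in> sets (path_space \<Otimes>\<^sub>M path_space) \<Longrightarrow> shift_pair h -` B \<in> sets (path_space \<Otimes>\<^sub>M path_space)"
  using measurable_sets[OF measurable_shift_pair, of B h] by (simp add: space_pair_measure)

lemma measure_joint_law_vimage_shift_pair:
  assumes S: "S \<in> sets (path_space \<Otimes>\<^sub>M path_space)"
  shows "measure joint_law (shift_pair h -` S) = measure joint_law S"
proof -
  have "measure joint_law S = measure (distr joint_law (path_space \<Otimes>\<^sub>M path_space) (shift_pair h)) S"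
    using joint_law_shift_invariant by simp
  also have "\<dots> = measure joint_law (shift_pair h -` S \<inter> space joint_law)"
    using S by (intro measure_distr) (auto simp: measurable_cong_sets[OF sets_joint_law refl])
  finally show ?thesis by simp
qed

lemma section_prob_shift:
  assumes A: "A \<in> sets (path_space \<Otimes>\<^sub>M path_space)" and inv: "shift_pair 1 -` A = A"
  shows "section_prob A (shift_path 1 y) = section_prob A y"
proof -
  have "(y, f) \<in> A \<longleftrightarrow> (shift_path 1 y, shift_path 1 f) \<in> A" for f
    using inv by (metis shift_pair_def fst_conv snd_conv vimage_eq)
  then have "Pair y -` A = shift_path 1 -` (Pair (shift_path 1 y) -` A) \<inter> space law_eps" by auto
  then have "section_prob A y = measure law_eps (shift_path 1 -` (Pair (shift_path 1 y) -` A) \<inter> space law_eps)"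
    by (simp add: section_prob_def)
  also have "\<dots> = measure (distr law_eps path_space (shift_path 1)) (Pair (shift_path 1 y) -` A)"
    using sets_Pair1[OF A] by (intro measure_distr[symmetric]) (auto simp: measurable_cong_sets[OF sets_law_eps refl])
  finally show ?thesis using law_eps_shift_invariant by (simp add: section_prob_def)
qed

text \<open>Mixing of the i.i.d. innovations: an event determined by the coordinates in \<open>[-N, N]\<close> and its
  translate by \<open>2N + 1\<close> have independent sections.\<close>
lemma section_prob_Int_shift:
  assumes B: "B \<in> sets (path_space \<Otimes>\<^sub>M path_space)" and d: "pair_depends_on (window N) B"
  shows "section_prob (B \<inter> shift_pair (2 * int N + 1) -` B) y
       = section_prob B y * section_prob (shift_pair (2 * int N + 1) -` B) y"
proof -
  define n where "n = 2 * int N + 1"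
  have B': "shift_pair n -` B \<in> sets (path_space \<Otimes>\<^sub>M path_space)" by (rule sets_vimage_shift_pair[OF B])
  have d1: "depends_on (window N) (Pair y -` B)"
    using d unfolding depends_on_def pair_depends_on_def by auto
  have d2: "depends_on {int N + 1..3 * int N + 1} (Pair y -` (shift_pair n -` B))"
    unfolding depends_on_def
  proof (intro allI impI)
    fix f f' :: "int \<Rightarrow> real"
    assume h: "\<forall>t\<in>{int N + 1..3 * int N + 1}. f t = f' t"
    have "\<forall>t\<in>window N. fst (shift_pair n (y, f)) t = fst (shift_pair n (y, f')) t
        \<and> snd (shift_pair n (y, f)) t = snd (shift_pair n (y, f')) t"
      using h by (auto simp: shift_pair_def shift_path_def n_def window_def)
    then have "shift_pair n (y, f) \<in> B \<longleftrightarrow> shift_pair n (y, f') \<in> B"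
      using d unfolding pair_depends_on_def by blast
    then show "f \<in> Pair y -` (shift_pair n -` B) \<longleftrightarrow> f' \<in> Pair y -` (shift_pair n -` B)"
      by simp
  qed
  have "Pair y -` (B \<inter> shift_pair n -` B) = Pair y -` B \<inter> Pair y -` (shift_pair n -` B)" by auto
  then show ?thesis
    unfolding n_def[symmetric] section_prob_def law_eps_def
    using indep_path_events[OF eps_indep measurable_eps sets_Pair1[OF B] sets_Pair1[OF B'] _ d1 d2]
    by (simp add: window_def)
qed

lemma integral_section_prob_sq_diff_le:
  assumes A: "A \<in> sets (path_space \<Otimes>\<^sub>M path_space)"
    and B: "B \<in> sets (path_space \<Otimes>\<^sub>M path_space)" and B': "B' \<in> sets (path_space \<Otimes>\<^sub>M path_space)"
  shows "\<bar>(\<integral>y. section_prob A y * section_prob A y \<partial>law_x) - (\<integral>y. section_prob B y * section_prob B' y \<partial>law_x)\<bar>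
       \<le> measure joint_law (sym_diff A B) + measure joint_law (sym_diff A B')"
proof -
  let ?\<psi> = "section_prob A" and ?d = "\<lambda>S y. section_prob (sym_diff A S) y"
  have dAB: "sym_diff A B \<in> sets (path_space \<Otimes>\<^sub>M path_space)" "sym_diff A B' \<in> sets (path_space \<Otimes>\<^sub>M path_space)"
    using A B B' by auto
  have pw: "\<bar>?\<psi> y * ?\<psi> y - section_prob B y * section_prob B' y\<bar> \<le> ?d B y + ?d B' y" for y
  proof -
    have "?\<psi> y * ?\<psi> y - section_prob B y * section_prob B' y
        = ?\<psi> y * (?\<psi> y - section_prob B' y) + section_prob B' y * (?\<psi> y - section_prob B y)"
      by (simp add: algebra_simps)
    also have "\<bar>\<dots>\<bar> \<le> \<bar>?\<psi> y - section_prob B' y\<bar> + \<bar>?\<psi> y - section_prob B y\<bar>"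
      using section_prob_bounds[of A y] section_prob_bounds[of B' y]
      by (intro order_trans[OF abs_triangle_ineq add_mono]) (auto simp: abs_mult mult_left_le_one_le)
    finally show ?thesis
      using section_prob_diff_le[OF A B, of y] section_prob_diff_le[OF A B', of y] by linarith
  qed
  have "\<bar>(\<integral>y. ?\<psi> y * ?\<psi> y \<partial>law_x) - (\<integral>y. section_prob B y * section_prob B' y \<partial>law_x)\<bar>
      = \<bar>\<integral>y. ?\<psi> y * ?\<psi> y - section_prob B y * section_prob B' y \<partial>law_x\<bar>"
    using integrable_section_prob_prod A B B' by simp
  also have "\<dots> \<le> (\<integral>y. \<bar>?\<psi> y * ?\<psi> y - section_prob B y * section_prob B' y\<bar> \<partial>law_x)"
    by (rule integral_abs_bound)
  also have "\<dots> \<le> (\<integral>y. ?d B y + ?d B' y \<partial>law_x)"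
    using pw integrable_section_prob_prod A B B' integrable_section_prob dAB
    by (intro integral_mono) auto
  also have "\<dots> = measure joint_law (sym_diff A B) + measure joint_law (sym_diff A B')"
    using integrable_section_prob dAB by (simp add: measure_joint_law_eq_integral)
  finally show ?thesis .
qed

lemma measure_joint_law_invariant_eq_integral_sq:
  assumes A: "A \<in> sets (path_space \<Otimes>\<^sub>M path_space)" and inv: "shift_pair 1 -` A = A"
  shows "measure joint_law A = (\<integral>y. section_prob A y * section_prob A y \<partial>law_x)"
proof -
  interpret Pj: prob_space joint_law by (rule prob_space_joint_law)
  let ?I = "\<integral>y. section_prob A y * section_prob A y \<partial>law_x"
  have approx: "\<bar>measure joint_law A - ?I\<bar> \<le> 4 * e" if e: "0 < e" for e
  proof -
    obtain B N where B: "B \<in> sets (path_space \<Otimes>\<^sub>M path_space)" "pair_depends_on (window N) B"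
        "measure joint_law (sym_diff A B) < e"
      using approx_pair_event_by_window[OF prob_space_law_x prob_space_law_eps sets_law_x sets_law_eps A e]
      unfolding joint_law_eq_pair_measure by auto
    define B' where "B' = shift_pair (2 * int N + 1) -` B"
    have B': "B' \<in> sets (path_space \<Otimes>\<^sub>M path_space)" unfolding B'_def by (rule sets_vimage_shift_pair[OF B(1)])
    have "shift_pair (2 * int N + 1) -` A = A"
      using vimage_shift_pair_of_nat[OF inv, of "2 * N + 1"] by (simp add: add.commute)
    then have vim: "shift_pair (2 * int N + 1) -` sym_diff A B = sym_diff A B'"
      unfolding B'_def vimage_Un vimage_Diff by (simp only:)
    have "sym_diff A B \<in> sets (path_space \<Otimes>\<^sub>M path_space)" using A B by auto
    from measure_joint_law_vimage_shift_pair[OF this, of "2 * int N + 1"]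
    have AB': "measure joint_law (sym_diff A B') = measure joint_law (sym_diff A B)"
      unfolding vim .
    have "\<bar>measure joint_law A - measure joint_law (B \<inter> B')\<bar> \<le> measure joint_law (sym_diff A (B \<inter> B'))"
      using A B B' by (intro Pj.measure_diff_le_symdiff) auto
    also have "\<dots> \<le> measure joint_law (sym_diff A B \<union> sym_diff A B')"
      using A B B' by (intro Pj.finite_measure_mono) auto
    also have "\<dots> \<le> measure joint_law (sym_diff A B) + measure joint_law (sym_diff A B')"
      using A B B' by (intro measure_Un_le) auto
    finally have "\<bar>measure joint_law A - measure joint_law (B \<inter> B')\<bar> \<le> 2 * measure joint_law (sym_diff A B)"
      using AB' by simp
    moreover have "measure joint_law (B \<inter> B') = (\<integral>y. section_prob B y * section_prob B' y \<partial>law_x)"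
      using measure_joint_law_eq_integral[of "B \<inter> B'"] section_prob_Int_shift[OF B(1,2)] B B'
      by (simp add: B'_def)
    moreover have "\<bar>?I - (\<integral>y. section_prob B y * section_prob B' y \<partial>law_x)\<bar> \<le> 2 * measure joint_law (sym_diff A B)"
      using integral_section_prob_sq_diff_le[OF A B(1) B'] AB' by simp
    ultimately show ?thesis using B(3) by linarith
  qed
  have "\<bar>measure joint_law A - ?I\<bar> \<le> 0 + e" if "0 < e" for e
    using approx[of "e / 4"] that by simp
  then have "\<bar>measure joint_law A - ?I\<bar> \<le> 0" by (rule field_le_epsilon)
  then show ?thesis by simp
qed

lemma measure_joint_law_invariant_0_or_1:
  assumes A: "A \<in> sets (path_space \<Otimes>\<^sub>M path_space)" and inv: "shift_pair 1 -` A = A"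
  shows "measure joint_law A \<in> {0, 1}"
proof -
  interpret Px: prob_space law_x by (rule prob_space_law_x)
  define C where "C = {y. section_prob A y = 1}"
  have C: "C \<in> sets path_space"
  proof -
    have "{y \<in> space path_space. section_prob A y = 1} \<in> sets path_space" using A by measurable
    then show ?thesis by (simp add: C_def)
  qed
  have "AE y in law_x. section_prob A y = indicator C y"
    unfolding C_def using A section_prob_bounds measure_joint_law_invariant_eq_integral_sq[OF A inv]
    by (intro Px.AE_eq_indicator_if_integral_eq_integral_sq)
      (auto simp: measure_joint_law_eq_integral measurable_cong_sets[OF sets_law_x refl])
  then have "measure joint_law A = (\<integral>y. indicator C y \<partial>law_x)"
    unfolding measure_joint_law_eq_integral[OF A]
    by (rule integral_cong_AE[rotated 2]) (use A C in \<open>auto simp: measurable_cong_sets[OF sets_law_x refl]\<close>)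
  also have "\<dots> = measure M (path x -` C \<inter> space M)"
    unfolding law_x_def using C by (simp add: measure_distr)
  also have "\<dots> \<in> {0, 1}"
  proof -
    have "(\<lambda>f t. f (t + 1)) -` C = C"
      using section_prob_shift[OF A inv] by (auto simp: C_def shift_path_def[abs_def])
    then show ?thesis using x_erg C unfolding ergodic_process_def by auto
  qed
  finally show ?thesis .
qed

lemma sol_ergodic: "ergodic_process M borel (\<lambda>t \<omega>. (sol_R t \<omega>, sol_sigma t \<omega>))"
  unfolding ergodic_process_def
proof (intro conjI ballI impI)
  show "strictly_stationary M borel (\<lambda>t \<omega>. (sol_R t \<omega>, sol_sigma t \<omega>))" by (rule sol_stationary)
  fix A :: "(int \<Rightarrow> real \<times> real) set"
  assume A: "A \<in> sets (PiM UNIV (\<lambda>_. borel))"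
    and inv: "(\<lambda>f t. f (t + 1)) -` A \<inter> space (PiM UNIV (\<lambda>_. borel)) = A"
  define A' where "A' = solution_map -` A"
  have A': "A' \<in> sets (path_space \<Otimes>\<^sub>M path_space)"
    using measurable_sets[OF measurable_solution_map A] by (simp add: A'_def space_pair_measure)
  have "solution_map (shift_pair 1 p) \<in> A \<longleftrightarrow> solution_map p \<in> A" for p
    using inv by (auto simp: solution_map_shift shift_path_def space_PiM PiE_def extensional_def)
  then have "shift_pair 1 -` A' = A'" by (simp add: A'_def vimage_def)
  moreover have "measure M (path (\<lambda>t \<omega>. (sol_R t \<omega>, sol_sigma t \<omega>)) -` A \<inter> space M) = measure joint_law A'"
    unfolding joint_law_def using A' by (simp add: measure_distr path_sol A'_def vimage_def)
  ultimately show "measure M (path (\<lambda>t \<omega>. (sol_R t \<omega>, sol_sigma t \<omega>)) -` A \<inter> space M) \<in> {0, 1}"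
    using measure_joint_law_invariant_0_or_1[OF A'] by simp
qed

end

theorem proposition3p1:
  fixes M :: "'a measure"
    and \<delta> \<alpha> :: real
    and g u c :: "real \<Rightarrow> real"
    and eps x :: "int \<Rightarrow> 'a \<Rightarrow> real"
    and F :: "int \<Rightarrow> 'a measure"
  assumes P: "prob_space M"
    and delta_pos: "\<delta> > 0"
    and g_cont: "continuous_on UNIV g" and g_nonneg: "\<forall>y. g y \<ge> 0"
    and u_cont: "continuous_on UNIV u" and u_nonneg: "\<forall>y. u y \<ge> 0"
    and c_cont: "continuous_on UNIV c" and c_nonneg: "\<forall>y. c y \<ge> 0"
    and eps_meas: "\<forall>t. eps t \<in> borel_measurable M"
    and eps_indep: "prob_space.indep_vars M (\<lambda>_. borel) eps UNIV"
    and eps_ident: "\<forall>t. distr M borel (eps t) = distr M borel (eps 0)"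
    and eps_L2: "\<forall>t. integrable M (\<lambda>\<omega>. (eps t \<omega>)\<^sup>2)"
    and eps_mean: "\<forall>t. integrable M (eps t) \<and> integral\<^sup>L M (eps t) = 0"
    and eps_var: "\<forall>t. integral\<^sup>L M (\<lambda>\<omega>. (eps t \<omega>)\<^sup>2) = 1"
    and x_erg: "ergodic_process M borel x"
    and x_eps_indep: "prob_space.indep_var M
          (PiM UNIV (\<lambda>_. borel)) (path x) (PiM UNIV (\<lambda>_. borel)) (path eps)"
    and F_sub: "\<forall>t. subalgebra M (F t)"
    and F_mono: "\<forall>s t. s \<le> t \<longrightarrow> sets (F s) \<subseteq> sets (F t)"
    and adapted: "\<forall>t. eps t \<in> borel_measurable (F t) \<and> x t \<in> borel_measurable (F t)"
    and alpha: "0 < \<alpha>" "\<alpha> \<le> 1"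
    and mom_eps: "\<forall>t. integrable M (\<lambda>\<omega>. \<bar>eps t \<omega>\<bar> powr (\<delta> * \<alpha>))"
    and mom_u: "\<forall>t. integrable M (\<lambda>\<omega>. u (x t \<omega>) powr \<alpha>)"
    and mom_c: "\<forall>t. integrable M (\<lambda>\<omega>. c (eps t \<omega>) powr \<alpha>) \<and>
                    integral\<^sup>L M (\<lambda>\<omega>. c (eps t \<omega>) powr \<alpha>) < 1"
    and mom_g: "\<forall>t. integrable M (\<lambda>\<omega>. g (eps t \<omega>) powr \<alpha>)"
  shows "\<exists>R \<sigma>.
      stationary_solution_of_order M (\<alpha> * \<delta>) \<delta> g u c eps x R \<sigma> \<and>
      (\<forall>R' \<sigma>'. stationary_solution_of_order M (\<alpha> * \<delta>) \<delta> g u c eps x R' \<sigma>' \<longrightarrow>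
          (\<forall>t. AE \<omega> in M. R' t \<omega> = R t \<omega> \<and> \<sigma>' t \<omega> = \<sigma> t \<omega>)) \<and>
      strictly_stationary M borel (\<lambda>t \<omega>. (R t \<omega>, \<sigma> t \<omega>)) \<and>
      ergodic_process M borel (\<lambda>t \<omega>. (R t \<omega>, \<sigma> t \<omega>)) \<and>
      (\<forall>t. AE \<omega> in M.
          R t \<omega> = \<sigma> t \<omega> * eps t \<omega> \<and>
          summable (\<lambda>k. causal_term g u c eps x t (Suc k) \<omega>) \<and>
          \<sigma> t \<omega> powr \<delta> = g (eps (t - 1) \<omega>) + u (x (t - 1) \<omega>)
              + (\<Sum>k. causal_term g u c eps x t (Suc k) \<omega>))"
proof -
  interpret causal_model M \<delta> \<alpha> g u c eps x
    using P delta_pos g_nonneg u_nonneg c_nonneg eps_meas eps_indep eps_ident x_erg x_eps_indep alpha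
      mom_eps mom_u mom_c mom_g g_cont u_cont c_cont
    by (intro causal_model.intro causal_model_axioms.intro) (auto intro: borel_measurable_continuous_onI)
  have "stationary_solution_of_order M (\<alpha> * \<delta>) \<delta> g u c eps x sol_R sol_sigma"
    unfolding stationary_solution_of_order_def
    using model_solution_sol sol_stationary integrable_sol_R_powr by blast
  then show ?thesis
    using stationary_solution_unique sol_stationary sol_ergodic causal_representation by blast
qed

end
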